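(* Fix $E_B<0$. There are constants $C>0$ and $\mu_0>0$ such that for all $L>0$, $\mu>0$ with $\tilde L\ge1$ and $\tilde\mu\ge\mu_0$, $$\Bigl|e_P(\mu)+\frac{\mu}{\log\tilde\mu}\Bigr|\le C\,\frac{\mu\,\log\log\tilde\mu}{(\log\tilde\mu)^2}.$$
   Context: Let $L>0$, $\Lambda_L:=\frac{2\pi}{L}\mathbb Z^2$; all sums over momenta run over $\Lambda_L$ unless further restricted. Fix $E_B<0$ and $\mu>0$, and set $\tilde\mu:=\mu/|E_B|$, $\tilde L:=L\sqrt{|E_B|}$. For $\tau>-\mu$ let $G_\mu(\tau):=L^{-2}\sum_k\Bigl(\frac{1}{k^2-E_B}-\frac{\chi_{(\mu,\infty)}(k^2)}{k^2+\tau}\Bigr)$, a monotonically increasing function of $\tau$. The polaron energy $e_P(\mu)$ is the lowest solution $e$ of $-e=L^{-2}\sum_{k^2\le\mu}G_\mu(-k^2-e)^{-1}$; it exists and $e_P(\mu)<0$. *)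

theory Defs
  imports "HOL-Analysis.Analysis"
begin

text \<open>Momenta in \<Lambda>_L = (2 pi / L) Z^2 are indexed by p = (m,n) :: int \<times> int,
  k = (2 pi / L) (m,n); ksq L p is k^2.\<close>
definition ksq :: "real \<Rightarrow> int \<times> int \<Rightarrow> real" where
  "ksq L p = (2 * pi / L)^2 * (real_of_int (fst p)^2 + real_of_int (snd p)^2)"

definition Gmu :: "real \<Rightarrow> real \<Rightarrow> real \<Rightarrow> real \<Rightarrow> real" where
  "Gmu EB L \<mu> \<tau> = (1 / L^2) *
     (\<Sum>\<^sub>\<infinity>p\<in>(UNIV :: (int \<times> int) set).
        1 / (ksq L p - EB) - (if ksq L p > \<mu> then 1 / (ksq L p + \<tau>) else 0))"

definition polaron_eq :: "real \<Rightarrow> real \<Rightarrow> real \<Rightarrow> real \<Rightarrow> bool" where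
  "polaron_eq EB L \<mu> e \<longleftrightarrow>
     (\<forall>p. ksq L p \<le> \<mu> \<longrightarrow> - ksq L p - e > - \<mu> \<and> Gmu EB L \<mu> (- ksq L p - e) \<noteq> 0) \<and>
     - e = (1 / L^2) * (\<Sum>p\<in>{p. ksq L p \<le> \<mu>}. inverse (Gmu EB L \<mu> (- ksq L p - e)))"

definition eP :: "real \<Rightarrow> real \<Rightarrow> real \<Rightarrow> real" where
  "eP EB L \<mu> = (LEAST e. polaron_eq EB L \<mu> e)"

end

theory Submission
  imports Defs
begin

text \<open>
  In units of \<open>(2\<pi>/L)\<^sup>2\<close> the momenta become the lattice \<open>\<int>\<^sup>2\<close>, the Fermi level becomes
  \<open>R = \<mu>/(2\<pi>/L)\<^sup>2\<close> and the binding energy \<open>b = |E\<^sub>B|/(2\<pi>/L)\<^sup>2 \<ge> 1/64\<close>; put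
  \<open>a = ln (R/b) = ln (\<mu>/|E\<^sub>B|)\<close>.  The disc \<open>|p|\<^sup>2 \<le> x\<close> contains \<open>\<pi> x + O(\<surd>x)\<close> lattice points
  (Gauss), so summation by parts turns lattice sums of radial functions into one-dimensional sums.
  This gives \<open>\<pi> a + O(1)\<close> for the sum over the Fermi disc in \<open>G\<^sub>\<mu>\<close>, and a tail beyond the
  Fermi circle of size \<open>O(ln a)\<close> as long as the argument stays a distance \<open>R/(2a)\<close> above
  \<open>-R\<close>.  Hence on the window \<open>[-R/a - \<delta>, -R/a + \<delta>]\<close> with \<open>\<delta> = 1000 R ln a / a\<^sup>2\<close> the
  right-hand side of the polaron equation is \<open>(\<pi> R + O(\<surd>R)) / (\<pi> a + O(ln a))\<close>; the
  equation has a solution there by the intermediate value theorem, and every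
  solution below the window is excluded by the same bounds.
\<close>

section \<open>Lattice points in a disc\<close>

definition norm2 :: "int \<times> int \<Rightarrow> int" where
  "norm2 p = fst p ^ 2 + snd p ^ 2"

abbreviation rnorm2 :: "int \<times> int \<Rightarrow> real" where
  "rnorm2 p \<equiv> real_of_int (norm2 p)"

definition disc_count :: "real \<Rightarrow> nat" where
  "disc_count x = card {p. rnorm2 p \<le> x}"

lemma norm2_nonneg: "0 \<le> norm2 p"
  by (simp add: norm2_def)

lemma norm2_eq_0_iff: "norm2 p = 0 \<longleftrightarrow> p = (0, 0)"
  by (cases p) (simp add: norm2_def)

lemma abs_le_square_int: "\<bar>m\<bar> \<le> (m::int)^2"
proof (cases "m = 0")
  case False
  then have "\<bar>m\<bar> * 1 \<le> \<bar>m\<bar> * \<bar>m\<bar>" by (intro mult_left_mono) auto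
  then show ?thesis by (simp add: power2_eq_square abs_mult[symmetric])
qed simp

lemma finite_disc: "finite {p. rnorm2 p \<le> x}"
proof -
  let ?M = "\<lceil>x\<rceil>"
  have "{p. rnorm2 p \<le> x} \<subseteq> {-?M..?M} \<times> {-?M..?M}"
  proof
    fix p assume "p \<in> {p. rnorm2 p \<le> x}"
    then have h: "norm2 p \<le> ?M" by (simp add: le_ceiling_iff)
    obtain m n where p: "p = (m, n)" by (cases p)
    have "\<bar>m\<bar> \<le> norm2 p" "\<bar>n\<bar> \<le> norm2 p"
      using abs_le_square_int[of m] abs_le_square_int[of n] by (auto simp: norm2_def p)
    then show "p \<in> {-?M..?M} \<times> {-?M..?M}" using h by (auto simp: p)
  qed
  then show ?thesis by (rule finite_subset) auto
qed

lemma int_square_le_iff_interval: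
  assumes "0 \<le> y"
  shows "{n::int. real_of_int (n^2) \<le> y} = {-\<lfloor>sqrt y\<rfloor>..\<lfloor>sqrt y\<rfloor>}"
proof -
  have "real_of_int (n^2) \<le> y \<longleftrightarrow> \<bar>n\<bar> \<le> \<lfloor>sqrt y\<rfloor>" for n
  proof -
    have "real_of_int (n^2) \<le> y \<longleftrightarrow> \<bar>real_of_int n\<bar> \<le> sqrt y"
      using real_le_rsqrt[of "\<bar>real_of_int n\<bar>" y] sqrt_ge_absD[of "real_of_int n" y] by auto
    also have "\<dots> \<longleftrightarrow> \<bar>n\<bar> \<le> \<lfloor>sqrt y\<rfloor>" by (metis le_floor_iff of_int_abs)
    finally show ?thesis .
  qed
  then show ?thesis by (intro set_eqI) (simp add: abs_le_iff; linarith)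
qed

lemma finite_int_square_le: "finite {n::int. (real_of_int n)^2 \<le> y}"
proof -
  have "{n::int. (real_of_int n)^2 \<le> y} \<subseteq> {n. real_of_int (n^2) \<le> max y 0}" by auto
  moreover have "finite {n::int. real_of_int (n^2) \<le> max y 0}"
    by (subst int_square_le_iff_interval) auto
  ultimately show ?thesis by (rule finite_subset)
qed

lemma card_int_square_le:
  assumes "0 \<le> y"
  shows "card {n::int. real_of_int (n^2) \<le> y} = nat (2 * \<lfloor>sqrt y\<rfloor> + 1)"
proof -
  have "card {-\<lfloor>sqrt y\<rfloor>..\<lfloor>sqrt y\<rfloor>} = nat (\<lfloor>sqrt y\<rfloor> - (-\<lfloor>sqrt y\<rfloor>) + 1)"
    by (rule card_atLeastAtMost_int)
  then show ?thesis unfolding int_square_le_iff_interval[OF assms] by (simp add: algebra_simps)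
qed

lemma disc_count_by_rows:
  assumes x: "0 \<le> x"
  shows "real (disc_count x)
    = (\<Sum>m\<in>{-\<lfloor>sqrt x\<rfloor>..\<lfloor>sqrt x\<rfloor>}. 2 * of_int \<lfloor>sqrt (x - of_int m ^ 2)\<rfloor> + 1)"
proof -
  let ?M = "\<lfloor>sqrt x\<rfloor>"
  have rows: "{n::int. real_of_int (n^2) \<le> x} = {-?M..?M}"
    by (rule int_square_le_iff_interval[OF x])
  have row_nonneg: "0 \<le> x - of_int m ^ 2" if "m \<in> {-?M..?M}" for m
    using that unfolding rows[symmetric] by simp
  have disc: "{p. rnorm2 p \<le> x} = Sigma {-?M..?M} (\<lambda>m. {n. real_of_int (n^2) \<le> x - of_int m ^ 2})"
  proof safe
    fix m n assume h: "rnorm2 (m, n) \<le> x"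
    have "real_of_int (m^2) \<le> x"
      using h by (simp add: norm2_def) (smt (verit) zero_le_power2)
    then show "m \<in> {-?M..?M}" unfolding rows[symmetric] by simp
    show "real_of_int (n^2) \<le> x - of_int m ^ 2" using h by (simp add: norm2_def)
  qed (simp add: norm2_def)
  have "disc_count x = (\<Sum>m\<in>{-?M..?M}. card {n. real_of_int (n^2) \<le> x - of_int m ^ 2})"
    unfolding disc_count_def disc by (subst card_SigmaI) (auto simp: finite_int_square_le)
  also have "\<dots> = (\<Sum>m\<in>{-?M..?M}. nat (2 * \<lfloor>sqrt (x - of_int m ^ 2)\<rfloor> + 1))"
    by (intro sum.cong refl card_int_square_le row_nonneg)
  finally have "real (disc_count x)
      = (\<Sum>m\<in>{-?M..?M}. real (nat (2 * \<lfloor>sqrt (x - of_int m ^ 2)\<rfloor> + 1)))"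
    by simp
  also have "\<dots> = (\<Sum>m\<in>{-?M..?M}. 2 * of_int \<lfloor>sqrt (x - of_int m ^ 2)\<rfloor> + 1)"
  proof (intro sum.cong refl)
    fix m assume "m \<in> {-?M..?M}"
    then have "0 \<le> 2 * \<lfloor>sqrt (x - of_int m ^ 2)\<rfloor> + 1" using row_nonneg by simp
    then show "real (nat (2 * \<lfloor>sqrt (x - of_int m ^ 2)\<rfloor> + 1)) = 2 * of_int \<lfloor>sqrt (x - of_int m ^ 2)\<rfloor> + 1"
      by (metis of_int_1 of_int_add of_int_mult of_int_numeral of_nat_nat)
  qed
  finally show ?thesis .
qed

definition disc_primitive :: "real \<Rightarrow> real \<Rightarrow> real" where
  "disc_primitive x t = (t * sqrt (x - t^2) + x * arcsin (t / sqrt x)) / 2"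

lemma disc_primitive_has_derivative:
  assumes x: "0 < x" and t: "\<bar>t\<bar> < sqrt x"
  shows "(disc_primitive x has_real_derivative sqrt (x - t^2)) (at t)"
proof -
  have sx: "sqrt x > 0" using x by simp
  have "t^2 < (sqrt x)^2" using t by (metis abs_ge_zero power2_abs power_strict_mono zero_less_numeral)
  then have xt: "x - t^2 > 0" using x by simp
  define w where "w = sqrt (x - t^2)"
  have w: "w > 0" using xt by (simp add: w_def)
  have w2: "w^2 = x - t^2" using xt by (simp add: w_def)
  have q: "-1 < t / sqrt x" "t / sqrt x < 1" using t sx by (auto simp: field_simps abs_less_iff)
  have inner: "((\<lambda>t. x - t^2) has_real_derivative -(2*t)) (at t)"
    by (auto intro!: derivative_eq_intros)
  have d1: "((\<lambda>t. sqrt (x - t^2)) has_real_derivative (inverse w / 2) * (- (2 * t))) (at t)"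
    unfolding w_def by (rule DERIV_chain2[OF DERIV_real_sqrt[OF xt] inner])
  have d2: "((\<lambda>t. arcsin (t / sqrt x)) has_real_derivative
      inverse (sqrt (1 - (t / sqrt x)^2)) * (1 / sqrt x)) (at t)"
    by (rule DERIV_chain2[OF DERIV_arcsin[OF q] DERIV_cdivide[OF DERIV_ident]])
  have d: "(disc_primitive x has_real_derivative ((1 * sqrt (x - t^2) + (inverse w / 2 * - (2 * t)) * t)
      + x * (inverse (sqrt (1 - (t / sqrt x)^2)) * (1 / sqrt x))) / 2) (at t)"
    unfolding disc_primitive_def[abs_def]
    by (rule DERIV_cdivide[OF DERIV_add[OF DERIV_mult[OF DERIV_ident d1] DERIV_cmult[OF d2]]])
  have "1 - (t / sqrt x)^2 = (x - t^2) / x" using x by (simp add: power_divide field_simps)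
  then have e: "sqrt (1 - (t / sqrt x)^2) = w / sqrt x" unfolding w_def by (simp add: real_sqrt_divide)
  have "((1 * sqrt (x - t^2) + (inverse w / 2 * - (2 * t)) * t)
      + x * (inverse (sqrt (1 - (t / sqrt x)^2)) * (1 / sqrt x))) / 2 = (w^2 - t^2 + x) / w / 2"
    unfolding e w_def[symmetric] using w sx by (simp add: field_simps power2_eq_square)
  also have "\<dots> = w" using w w2 by (simp add: field_simps power2_eq_square)
  finally show ?thesis using DERIV_cong[OF d] unfolding w_def by blast
qed

lemma continuous_on_disc_primitive:
  assumes "0 < x"
  shows "continuous_on {0..sqrt x} (disc_primitive x)"
proof -
  have "\<forall>t\<in>{0..sqrt x}. -1 \<le> t / sqrt x \<and> t / sqrt x \<le> 1"
    using assms by (auto simp: divide_le_eq le_divide_eq)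
  then show ?thesis unfolding disc_primitive_def using assms by (intro continuous_intros) auto
qed

lemma disc_primitive_increment_bounds:
  assumes x: "0 < x" and ab: "0 \<le> a" "a \<le> b" "b \<le> sqrt x"
  shows "sqrt (x - b^2) * (b - a) \<le> disc_primitive x b - disc_primitive x a"
    and "disc_primitive x b - disc_primitive x a \<le> sqrt (x - a^2) * (b - a)"
proof -
  have mono: "sqrt (x - v^2) \<le> sqrt (x - u^2)" if "0 \<le> u" "u \<le> v" for u v
    using that by (simp add: power_mono)
  have "sqrt (x - b^2) * (b - a) \<le> disc_primitive x b - disc_primitive x a
      \<and> disc_primitive x b - disc_primitive x a \<le> sqrt (x - a^2) * (b - a)"
  proof (cases "a = b")
    case False
    then have lt: "a < b" using ab by simp
    have deriv: "(disc_primitive x has_real_derivative sqrt (x - z^2)) (at z)" if "a < z" "z < b" for z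
      using disc_primitive_has_derivative[OF x, of z] that ab by simp
    have "continuous_on {a..b} (disc_primitive x)"
      by (rule continuous_on_subset[OF continuous_on_disc_primitive[OF x]]) (use ab in auto)
    moreover have "disc_primitive x differentiable (at z)" if "a < z" "z < b" for z
      using deriv[OF that] real_differentiable_def by blast
    ultimately obtain l z where z: "a < z" "z < b" "DERIV (disc_primitive x) z :> l"
        "disc_primitive x b - disc_primitive x a = (b - a) * l"
      using MVT[OF lt] by blast
    have "l = sqrt (x - z^2)" using DERIV_unique[OF z(3) deriv[OF z(1,2)]] .
    then have "sqrt (x - b^2) \<le> l" "l \<le> sqrt (x - a^2)"
      using mono[of z b] mono[of a z] z ab by auto
    then show ?thesis using z(4) lt by (simp add: mult.commute mult_right_mono)
  qed simp
  then show "sqrt (x - b^2) * (b - a) \<le> disc_primitive x b - disc_primitive x a"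
    and "disc_primitive x b - disc_primitive x a \<le> sqrt (x - a^2) * (b - a)" by auto
qed

lemma disc_primitive_sum_bounds:
  assumes x: "0 < x" and n: "real n \<le> sqrt x"
  shows "(\<Sum>k\<in>{1..n}. sqrt (x - (real k)^2)) \<le> disc_primitive x n - disc_primitive x 0"
    and "disc_primitive x n - disc_primitive x 0 \<le> (\<Sum>k<n. sqrt (x - (real k)^2))"
proof -
  have "(\<Sum>k\<in>{1..n}. sqrt (x - (real k)^2)) \<le> disc_primitive x n - disc_primitive x 0
      \<and> disc_primitive x n - disc_primitive x 0 \<le> (\<Sum>k<n. sqrt (x - (real k)^2))"
    using n
  proof (induction n)
    case (Suc n)
    have "sqrt (x - (real n + 1)^2) * ((real n + 1) - real n)
          \<le> disc_primitive x (real n + 1) - disc_primitive x (real n)"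
      "disc_primitive x (real n + 1) - disc_primitive x (real n)
          \<le> sqrt (x - (real n)^2) * ((real n + 1) - real n)"
      by (rule disc_primitive_increment_bounds[OF x]; use Suc.prems in simp)+
    then show ?case using Suc by (simp add: add.commute)
  qed simp
  then show "(\<Sum>k\<in>{1..n}. sqrt (x - (real k)^2)) \<le> disc_primitive x n - disc_primitive x 0"
    and "disc_primitive x n - disc_primitive x 0 \<le> (\<Sum>k<n. sqrt (x - (real k)^2))" by auto
qed

text \<open>Comparing the row lengths of the quarter disc with the area \<open>\<pi> x / 4\<close> under the
  decreasing function \<open>t \<mapsto> \<surd>(x - t\<^sup>2)\<close>, whose primitive is \<open>disc_primitive x\<close>.\<close>

lemma sum_disc_rows_bounds:
  assumes x: "0 < x"
  defines "n \<equiv> nat \<lfloor>sqrt x\<rfloor>"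
  shows "pi * x / 4 \<le> (\<Sum>k\<in>{0..n}. sqrt (x - (real k)^2))"
    and "(\<Sum>k\<in>{0..n}. sqrt (x - (real k)^2)) \<le> pi * x / 4 + sqrt x"
proof -
  define phi where "phi t = sqrt (x - t^2)" for t
  have nle: "real n \<le> sqrt x" unfolding n_def using x by (simp add: of_nat_nat)
  have ngt: "sqrt x < real n + 1" unfolding n_def using x by linarith
  have ends: "disc_primitive x (sqrt x) = pi * x / 4" "disc_primitive x 0 = 0"
    using x by (auto simp: disc_primitive_def)
  note sp = disc_primitive_sum_bounds[OF x nle, folded phi_def]
  have tail: "0 \<le> disc_primitive x (sqrt x) - disc_primitive x n"
    "disc_primitive x (sqrt x) - disc_primitive x n \<le> phi (real n)"
  proof -
    have "phi (real n) * (sqrt x - real n) \<le> phi (real n)"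
    proof -
      have "(real n)^2 \<le> (sqrt x)^2" using power_mono[OF nle, of 2] by simp
      then have "0 \<le> phi (real n)" unfolding phi_def using x by simp
      then show ?thesis using nle ngt by (simp add: mult_left_le)
    qed
    moreover have "phi (sqrt x) = 0" using x by (simp add: phi_def)
    ultimately show "0 \<le> disc_primitive x (sqrt x) - disc_primitive x n"
      "disc_primitive x (sqrt x) - disc_primitive x n \<le> phi (real n)"
      using disc_primitive_increment_bounds[OF x, of n "sqrt x", folded phi_def] nle by auto
  qed
  have S1: "(\<Sum>k\<in>{0..n}. phi (real k)) = phi 0 + (\<Sum>k\<in>{1..n}. phi (real k))"
    by (simp add: sum.atLeast_Suc_atMost)
  have S2: "(\<Sum>k\<in>{0..n}. phi (real k)) = (\<Sum>k<n. phi (real k)) + phi (real n)"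
    by (simp add: atLeast0AtMost lessThan_Suc_atMost[symmetric])
  have "phi 0 = sqrt x" by (simp add: phi_def)
  then show "pi * x / 4 \<le> (\<Sum>k\<in>{0..n}. sqrt (x - (real k)^2))"
    and "(\<Sum>k\<in>{0..n}. sqrt (x - (real k)^2)) \<le> pi * x / 4 + sqrt x"
    using sp tail S1 S2 ends unfolding phi_def by linarith+
qed

lemma sum_symmetric_interval:
  fixes F :: "int \<Rightarrow> real"
  assumes even: "\<And>m. F (-m) = F m"
  shows "(\<Sum>m\<in>{-int n..int n}. F m) = 2 * (\<Sum>k\<in>{0..n}. F (int k)) - F 0"
proof (induction n)
  case (Suc n)
  have "{-int (Suc n)..int (Suc n)} = insert (-int (Suc n)) (insert (int (Suc n)) {-int n..int n})"
    by auto
  then have "(\<Sum>m\<in>{-int (Suc n)..int (Suc n)}. F m)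
      = F (-int (Suc n)) + F (int (Suc n)) + (\<Sum>m\<in>{-int n..int n}. F m)"
    by simp
  also have "\<dots> = 2 * F (int (Suc n)) + (2 * (\<Sum>k\<in>{0..n}. F (int k)) - F 0)"
    using Suc.IH even[of "int (Suc n)"] by simp
  also have "\<dots> = 2 * (\<Sum>k\<in>{0..Suc n}. F (int k)) - F 0"
    by (simp add: sum.atLeast0_atMost_Suc algebra_simps)
  finally show ?case .
qed simp

lemma disc_count_error:
  assumes x: "0 \<le> x"
  shows "\<bar>real (disc_count x) - pi * x\<bar> \<le> 4 * sqrt x + 1"
proof (cases "x = 0")
  case True
  then show ?thesis using disc_count_by_rows[of 0] by simp
next
  case False
  then have x: "0 < x" using x by simp
  define n where "n = nat \<lfloor>sqrt x\<rfloor>"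
  define phi where "phi t = sqrt (x - t^2)" for t
  define S where "S = (\<Sum>k\<in>{0..n}. phi (real k))"
  have Mn: "\<lfloor>sqrt x\<rfloor> = int n" unfolding n_def using x by simp
  have nle: "real n \<le> sqrt x" unfolding n_def using x by (simp add: of_nat_nat)
  have S: "pi * x / 4 \<le> S" "S \<le> pi * x / 4 + sqrt x"
    using sum_disc_rows_bounds[OF x] unfolding S_def phi_def n_def by auto
  have sym: "(\<Sum>m\<in>{-int n..int n}. phi (of_int m)) = 2 * S - sqrt x"
    unfolding S_def using sum_symmetric_interval[of "\<lambda>m. phi (of_int m)" n] by (simp add: phi_def)
  have rows: "real (disc_count x) = (\<Sum>m\<in>{-int n..int n}. 2 * of_int \<lfloor>phi (of_int m)\<rfloor> + 1)"
    using disc_count_by_rows[of x] x unfolding Mn phi_def by simp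
  have card: "real (card {-int n..int n}) = 2 * real n + 1" by simp
  have "real (disc_count x) \<le> (\<Sum>m\<in>{-int n..int n}. 2 * phi (of_int m) + 1)"
    "(\<Sum>m\<in>{-int n..int n}. 2 * phi (of_int m) - 1) \<le> real (disc_count x)"
    unfolding rows by (intro sum_mono; linarith)+
  moreover have "(\<Sum>m\<in>{-int n..int n}. 2 * phi (of_int m) + 1) = 2 * (2 * S - sqrt x) + (2 * real n + 1)"
    "(\<Sum>m\<in>{-int n..int n}. 2 * phi (of_int m) - 1) = 2 * (2 * S - sqrt x) - (2 * real n + 1)"
    using sym card by (simp_all add: sum.distrib sum_subtractf sum_distrib_left[symmetric])
  ultimately show ?thesis using S nle by (simp add: abs_le_iff)
qed

section \<open>Lattice sums of radial functions\<close>

definition shell :: "nat \<Rightarrow> nat \<Rightarrow> (int \<times> int) set" where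
  "shell A B = {p. int A < norm2 p \<and> norm2 p \<le> int B}"

definition count_error :: "nat \<Rightarrow> real" where
  "count_error n = 4 * sqrt (real n) + 1"

lemma disc_of_nat: "{p. rnorm2 p \<le> real n} = {p. norm2 p \<le> int n}"
  by (metis (no_types, opaque_lifting) of_int_le_iff of_int_of_nat_eq)

lemma finite_disc_int: "finite {p. norm2 p \<le> int n}"
  using finite_disc[of "real n"] unfolding disc_of_nat .

lemma finite_shell: "finite (shell A B)"
  by (rule finite_subset[OF _ finite_disc_int[of B]]) (auto simp: shell_def)

lemma finite_circle: "finite {p. norm2 p = int n}"
  by (rule finite_subset[OF _ finite_disc_int[of n]]) auto

lemma disc_count_Suc:
  "disc_count (Suc n) = disc_count n + card {p. norm2 p = int (Suc n)}"
proof -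
  have "{p. norm2 p \<le> int (Suc n)} = {p. norm2 p \<le> int n} \<union> {p. norm2 p = int (Suc n)}" by auto
  then have "card {p. norm2 p \<le> int (Suc n)} = card {p. norm2 p \<le> int n} + card {p. norm2 p = int (Suc n)}"
    using finite_disc_int[of n] finite_circle[of "Suc n"] by (simp add: card_Un_disjoint disjoint_iff)
  then show ?thesis unfolding disc_count_def disc_of_nat[symmetric] by simp
qed

lemma count_error_bound: "\<bar>real (disc_count (real n)) - pi * real n\<bar> \<le> count_error n"
  unfolding count_error_def using disc_count_error[of "real n"] by simp

lemma shell_sum_by_parts:
  assumes "A \<le> B"
  shows "(\<Sum>p\<in>shell A B. f (nat (norm2 p)))
    = real (disc_count B) * f B - real (disc_count A) * f A
      + (\<Sum>n\<in>{A..<B}. real (disc_count n) * (f n - f (Suc n)))"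
  using assms
proof (induction B rule: dec_induct)
  case base
  have "shell A A = {}" by (auto simp: shell_def)
  then show ?case by simp
next
  case (step n)
  have split: "shell A (Suc n) = shell A n \<union> {p. norm2 p = int (Suc n)}"
    using step.hyps(1) by (auto simp: shell_def)
  have circle: "(\<Sum>p\<in>{p. norm2 p = int (Suc n)}. f (nat (norm2 p)))
      = real (card {p. norm2 p = int (Suc n)}) * f (Suc n)"
  proof -
    have "(\<Sum>p\<in>{p. norm2 p = int (Suc n)}. f (nat (norm2 p)))
        = (\<Sum>p\<in>{p. norm2 p = int (Suc n)}. f (Suc n))"
      by (intro sum.cong refl) (metis mem_Collect_eq nat_int)
    then show ?thesis by simp
  qed
  have "(\<Sum>p\<in>shell A (Suc n). f (nat (norm2 p)))
      = (\<Sum>p\<in>shell A n. f (nat (norm2 p))) + real (card {p. norm2 p = int (Suc n)}) * f (Suc n)"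
    unfolding split circle[symmetric]
    by (rule sum.union_disjoint[OF finite_shell finite_circle]) (auto simp: shell_def)
  then show ?case
    using step.IH step.hyps(1) disc_count_Suc[of n] by (simp add: algebra_simps)
qed

lemma sum_by_parts_identity:
  assumes "A \<le> B"
  shows "real B * f B - real A * f A + (\<Sum>n\<in>{A..<B}. real n * (f n - f (Suc n)))
    = (\<Sum>n\<in>{A<..B}. f n)"
  using assms
proof (induction B rule: dec_induct)
  case (step n)
  have "{A<..Suc n} = insert (Suc n) {A<..n}" using step.hyps(1) by auto
  then show ?case using step.IH step.hyps(1) by (simp add: algebra_simps)
qed simp

lemma shell_sum_approx:
  assumes AB: "A \<le> B"
    and nonneg: "\<And>n. A \<le> n \<Longrightarrow> n \<le> B \<Longrightarrow> 0 \<le> f n"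
    and antimono: "\<And>n. A \<le> n \<Longrightarrow> n < B \<Longrightarrow> f (Suc n) \<le> f n"
  shows "\<bar>(\<Sum>p\<in>shell A B. f (nat (norm2 p))) - pi * (\<Sum>n\<in>{A<..B}. f n)\<bar>
    \<le> count_error B * f B + count_error A * f A
      + (\<Sum>n\<in>{A..<B}. count_error n * (f n - f (Suc n)))"
proof -
  define d where "d n = real (disc_count (real n)) - pi * real n" for n
  have "(\<Sum>n\<in>{A..<B}. real (disc_count n) * (f n - f (Suc n)))
      = (\<Sum>n\<in>{A..<B}. pi * (real n * (f n - f (Suc n))) + d n * (f n - f (Suc n)))"
    by (intro sum.cong refl) (simp add: d_def algebra_simps)
  also have "\<dots> = pi * (\<Sum>n\<in>{A..<B}. real n * (f n - f (Suc n))) + (\<Sum>n\<in>{A..<B}. d n * (f n - f (Suc n)))"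
    by (simp add: sum.distrib sum_distrib_left)
  finally have eq: "(\<Sum>p\<in>shell A B. f (nat (norm2 p))) - pi * (\<Sum>n\<in>{A<..B}. f n)
      = d B * f B - d A * f A + (\<Sum>n\<in>{A..<B}. d n * (f n - f (Suc n)))"
    unfolding shell_sum_by_parts[OF AB] sum_by_parts_identity[OF AB, symmetric]
    by (simp add: d_def algebra_simps)
  have dE: "\<bar>d n\<bar> \<le> count_error n" for n unfolding d_def by (rule count_error_bound)
  have "\<bar>d B * f B\<bar> \<le> count_error B * f B" "\<bar>d A * f A\<bar> \<le> count_error A * f A"
    using dE[of B] dE[of A] nonneg[of B] nonneg[of A] AB by (simp_all add: abs_mult mult_right_mono)
  moreover have "\<bar>\<Sum>n\<in>{A..<B}. d n * (f n - f (Suc n))\<bar>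
      \<le> (\<Sum>n\<in>{A..<B}. count_error n * (f n - f (Suc n)))"
  proof -
    have "\<bar>\<Sum>n\<in>{A..<B}. d n * (f n - f (Suc n))\<bar> \<le> (\<Sum>n\<in>{A..<B}. \<bar>d n * (f n - f (Suc n))\<bar>)"
      by (rule sum_abs)
    also have "\<dots> \<le> (\<Sum>n\<in>{A..<B}. count_error n * (f n - f (Suc n)))"
      using dE antimono by (intro sum_mono) (simp add: abs_mult mult_right_mono)
    finally show ?thesis .
  qed
  ultimately show ?thesis unfolding eq by linarith
qed

lemma shell_sum_approx_antimono:
  assumes AB: "A \<le> B"
    and nonneg: "\<And>n. A \<le> n \<Longrightarrow> 0 \<le> f n"
    and antimono: "\<And>n. A \<le> n \<Longrightarrow> f (Suc n) \<le> f n"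
  shows "\<bar>(\<Sum>p\<in>shell A B. f (nat (norm2 p))) - pi * (\<Sum>n\<in>{A<..B}. f n)\<bar>
    \<le> 2 * count_error B * f A"
proof -
  have mono: "count_error n \<le> count_error B" if "n \<le> B" for n
    unfolding count_error_def using that by simp
  have "(\<Sum>n\<in>{A..<B}. count_error n * (f n - f (Suc n)))
      \<le> (\<Sum>n\<in>{A..<B}. count_error B * (f n - f (Suc n)))"
    using antimono mono by (intro sum_mono mult_right_mono) auto
  also have "\<dots> = count_error B * (f A - f B)"
    using sum_Suc_diff'[OF AB, of f] by (simp add: sum_distrib_left[symmetric] sum_subtractf)
  finally have "(\<Sum>n\<in>{A..<B}. count_error n * (f n - f (Suc n))) \<le> count_error B * (f A - f B)" .
  moreover have "count_error A * f A \<le> count_error B * f A"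
    using mono[OF AB] nonneg[of A] by (intro mult_right_mono) auto
  moreover have "\<bar>(\<Sum>p\<in>shell A B. f (nat (norm2 p))) - pi * (\<Sum>n\<in>{A<..B}. f n)\<bar>
    \<le> count_error B * f B + count_error A * f A
      + (\<Sum>n\<in>{A..<B}. count_error n * (f n - f (Suc n)))"
    using AB nonneg antimono by (intro shell_sum_approx) auto
  ultimately show ?thesis by (simp add: algebra_simps)
qed

lemma count_error_le: "1 \<le> n \<Longrightarrow> count_error n \<le> 5 * sqrt (real n)"
  unfolding count_error_def by simp

lemma inverse_power_three_halves_le_diff:
  assumes M: "1 \<le> M"
  shows "1 / ((real M + 1) * sqrt (real M + 1)) \<le> 2 / sqrt (real M) - 2 / sqrt (real M + 1)"
proof -
  define u where "u = sqrt (real M)"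
  define v where "v = sqrt (real M + 1)"
  have u: "u > 0" unfolding u_def using M by simp
  have uv: "u < v" unfolding u_def v_def by simp
  have v: "v > 0" using u uv by simp
  have "(v - u) * (v + u) = 1" unfolding u_def v_def by (simp add: algebra_simps)
  then have vu: "v - u = 1 / (u + v)" using u v by (simp add: eq_divide_eq add.commute)
  have diff: "2 / u - 2 / v = 2 / (u * v * (u + v))"
  proof -
    have "2 / u - 2 / v = 2 * (v - u) / (u * v)" using u v by (simp add: field_simps)
    then show ?thesis unfolding vu by simp
  qed
  have "u * v * (u + v) \<le> 2 * (v * v * v)"
  proof -
    have "u * u \<le> v * v" "u * v \<le> v * v"
      using u uv by (intro mult_mono mult_right_mono; simp)+
    then have "u * u + u * v \<le> 2 * (v * v)" by simp
    then have "v * (u * u + u * v) \<le> v * (2 * (v * v))" using v by (intro mult_left_mono) auto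
    then show ?thesis by (simp add: algebra_simps)
  qed
  then have "1 / (v * v * v) \<le> 2 / u - 2 / v"
    unfolding diff using u v by (simp add: divide_simps)
  moreover have "real M + 1 = v * v" unfolding v_def by simp
  ultimately show ?thesis unfolding u_def v_def by simp
qed

lemma sum_inverse_power_three_halves_le: "(\<Sum>n\<in>{1..M}. 1 / (real n * sqrt (real n))) \<le> 3"
proof (cases "M = 0")
  case False
  have "(\<Sum>n\<in>{1..M}. 1 / (real n * sqrt (real n))) \<le> 3 - 2 / sqrt (real M)" if "1 \<le> M"
    using that
  proof (induction M rule: dec_induct)
    case (step n)
    have "(\<Sum>n\<in>{1..Suc n}. 1 / (real n * sqrt (real n)))
        = (\<Sum>n\<in>{1..n}. 1 / (real n * sqrt (real n))) + 1 / ((real n + 1) * sqrt (real n + 1))"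
      by (simp add: add.commute)
    also have "\<dots> \<le> 3 - 2 / sqrt (real n) + (2 / sqrt (real n) - 2 / sqrt (real n + 1))"
      using step.IH inverse_power_three_halves_le_diff[OF step.hyps(1)] by linarith
    finally show ?case by (simp add: add.commute)
  qed simp
  moreover have "0 \<le> 2 / sqrt (real M)" by simp
  ultimately show ?thesis using False by linarith
qed simp

lemma sum_inverse_shift_le_ln:
  assumes AB: "A \<le> B" and c: "0 < real A + c"
  shows "(\<Sum>n\<in>{A<..B}. 1 / (real n + c)) \<le> ln (real B + c) - ln (real A + c)"
  using AB
proof (induction B rule: dec_induct)
  case (step n)
  have pos: "real n + c > 0" using step.hyps c by linarith
  have "ln ((real n + c) / (real n + 1 + c)) \<le> (real n + c) / (real n + 1 + c) - 1"
    using pos by (intro ln_le_minus_one) simp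
  also have "\<dots> = - 1 / (real n + 1 + c)" using pos by (simp add: field_simps)
  finally have "1 / (real n + 1 + c) \<le> ln (real n + 1 + c) - ln (real n + c)"
    using pos by (simp add: ln_div)
  moreover have "{A<..Suc n} = insert (Suc n) {A<..n}" using step.hyps by auto
  ultimately show ?case using step.IH by (simp add: add.commute add.left_commute)
qed simp

lemma ln_le_sum_inverse_shift:
  assumes AB: "A \<le> B" and c: "0 < real A + 1 + c"
  shows "ln (real B + 1 + c) - ln (real A + 1 + c) \<le> (\<Sum>n\<in>{A<..B}. 1 / (real n + c))"
  using AB
proof (induction B rule: dec_induct)
  case (step n)
  have pos: "real n + 1 + c > 0" using step.hyps c by linarith
  have "ln (1 + 1 / (real n + 1 + c)) \<le> 1 / (real n + 1 + c)"
    using pos by (intro ln_add_one_self_le_self) simp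
  moreover have "1 + 1 / (real n + 1 + c) = (real n + 1 + 1 + c) / (real n + 1 + c)"
    using pos by (simp add: field_simps)
  ultimately have "ln (real n + 1 + 1 + c) - ln (real n + 1 + c) \<le> 1 / (real n + 1 + c)"
    using pos by (simp add: ln_div)
  moreover have "{A<..Suc n} = insert (Suc n) {A<..n}" using step.hyps by auto
  ultimately show ?case using step.IH by (simp add: add.commute add.left_commute)
qed simp

lemma sum_inverse_square_le:
  assumes AB: "A \<le> B" and A: "1 \<le> A"
  shows "(\<Sum>n\<in>{A<..B}. 1 / (real n)^2) \<le> 1 / real A - 1 / real B"
  using AB
proof (induction B rule: dec_induct)
  case (step n)
  have pos: "real n \<ge> 1" using step.hyps A by simp
  have "1 / real n - 1 / (real n + 1) = 1 / (real n * (real n + 1))" using pos by (simp add: field_simps)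
  moreover have "real n * (real n + 1) \<le> (real n + 1)^2" using pos by (simp add: power2_eq_square)
  ultimately have "1 / (real n + 1)^2 \<le> 1 / real n - 1 / (real n + 1)"
    using pos by (simp add: frac_le)
  moreover have "{A<..Suc n} = insert (Suc n) {A<..n}" using step.hyps by auto
  ultimately show ?case using step.IH by (simp add: add.commute)
qed simp

lemma shell_floor:
  assumes "0 \<le> R" "R \<le> Y"
  shows "shell (nat \<lfloor>R\<rfloor>) (nat \<lfloor>Y\<rfloor>) = {p. R < rnorm2 p \<and> rnorm2 p \<le> Y}"
proof -
  have i: "int (nat \<lfloor>R\<rfloor>) = \<lfloor>R\<rfloor>" "int (nat \<lfloor>Y\<rfloor>) = \<lfloor>Y\<rfloor>" using assms by simp_all
  have "\<lfloor>R\<rfloor> < z \<longleftrightarrow> R < real_of_int z" "z \<le> \<lfloor>Y\<rfloor> \<longleftrightarrow> real_of_int z \<le> Y" for z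
    by (simp_all only: floor_less_iff le_floor_iff)
  then show ?thesis unfolding shell_def i by blast
qed

lemma disc_floor:
  assumes "0 \<le> R"
  shows "{p. rnorm2 p \<le> R} = {p. norm2 p \<le> int (nat \<lfloor>R\<rfloor>)}"
proof -
  have "int (nat \<lfloor>R\<rfloor>) = \<lfloor>R\<rfloor>" using assms by simp
  moreover have "z \<le> \<lfloor>R\<rfloor> \<longleftrightarrow> real_of_int z \<le> R" for z by (rule le_floor_iff)
  ultimately show ?thesis by simp
qed

lemma disc_int_eq_insert_shell: "{p. norm2 p \<le> int n} = insert (0, 0) (shell 0 n)"
proof (rule set_eqI)
  fix p
  show "p \<in> {p. norm2 p \<le> int n} \<longleftrightarrow> p \<in> insert (0, 0) (shell 0 n)"
    using norm2_nonneg[of p] norm2_eq_0_iff[of p] unfolding shell_def by (cases "p = (0, 0)") auto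
qed

lemma sum_shell_rnorm2:
  "(\<Sum>p\<in>shell A B. F (rnorm2 p)) = (\<Sum>p\<in>shell A B. F (real (nat (norm2 p))))"
  using norm2_nonneg by (intro sum.cong refl) simp

lemma inverse_shift_diff_le:
  fixes b x :: real
  assumes b: "0 < b" and x: "1 \<le> x"
  shows "1 / (x + b) - 1 / (x + 1 + b) \<le> 1 / (x * x)"
proof -
  have "1 / (x + b) - 1 / (x + 1 + b) = 1 / ((x + b) * (x + 1 + b))"
    using b x by (simp add: field_simps)
  moreover have "x * x \<le> (x + b) * (x + 1 + b)" using b x by (intro mult_mono) auto
  ultimately show ?thesis using x by (simp add: frac_le)
qed

lemma inverse_square_diff_le:
  fixes x :: real
  assumes x: "1 \<le> x"
  shows "1 / x^2 - 1 / (x + 1)^2 \<le> 3 / x^3"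
proof -
  have "1 / x^2 - 1 / (x + 1)^2 = ((x + 1)^2 - x^2) / (x^2 * (x + 1)^2)"
    using x by (simp add: diff_frac_eq)
  also have "(x + 1)^2 - x^2 = 2 * x + 1" by (simp add: power2_eq_square algebra_simps)
  finally have "1 / x^2 - 1 / (x + 1)^2 = (2 * x + 1) / (x^2 * (x + 1)^2)" .
  also have "\<dots> \<le> (3 * x) / (x^2 * x^2)"
    using x by (intro frac_le mult_mono power_mono) auto
  also have "\<dots> = 3 / x^3" using x by (simp add: field_simps power2_eq_square power3_eq_cube)
  finally show ?thesis .
qed

lemma shell_sum_inverse_shift_error:
  assumes b: "0 < b"
  defines "f \<equiv> \<lambda>n::nat. 1 / (real n + b)"
  shows "count_error M * f M + count_error 0 * f 0 + (\<Sum>n\<in>{0..<M}. count_error n * (f n - f (Suc n)))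
    \<le> 19 + 3 / b"
proof -
  have first: "count_error M * f M \<le> 4 + 1 / b"
  proof (cases "M = 0")
    case False
    then have M: "real M \<ge> 1" by simp
    have "count_error M * f M = 4 * (sqrt M / (M + b)) + 1 / (M + b)"
      unfolding count_error_def f_def by (simp add: distrib_right add_divide_distrib)
    moreover have "sqrt M / (M + b) \<le> sqrt M / M" using b M by (intro divide_left_mono) auto
    moreover have "sqrt M / M \<le> 1" using M by (simp add: sqrt_divide_self_eq inverse_le_1_iff)
    moreover have "1 / (M + b) \<le> 1 / b" using b by (simp add: frac_le)
    ultimately show ?thesis by linarith
  qed (simp add: count_error_def f_def)
  have diffs: "(\<Sum>n\<in>{0..<M}. count_error n * (f n - f (Suc n))) \<le> 1 / b + 15"
  proof (cases "M = 0")
    case False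
    have zero: "count_error 0 * (f 0 - f (Suc 0)) \<le> 1 / b"
      using b by (simp add: count_error_def f_def)
    have each: "count_error n * (f n - f (Suc n)) \<le> 5 * (1 / (real n * sqrt (real n)))"
      if n: "1 \<le> n" for n
    proof -
      have rn: "real n \<ge> 1" using n by simp
      have "f n - f (Suc n) \<le> 1 / (real n * real n)"
        unfolding f_def using inverse_shift_diff_le[OF b rn] by (simp add: add.commute)
      then have "count_error n * (f n - f (Suc n)) \<le> 5 * sqrt (real n) * (1 / (real n * real n))"
        using count_error_le[OF n] b by (intro mult_mono) (auto simp: f_def count_error_def field_simps)
      also have "\<dots> = 5 * (1 / (real n * sqrt (real n)))"
        using rn real_sqrt_mult_self[of "real n"] by (simp add: field_simps del: real_sqrt_mult_self)
      finally show ?thesis .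
    qed
    have "(\<Sum>n\<in>{1..<M}. count_error n * (f n - f (Suc n)))
        \<le> (\<Sum>n\<in>{1..M}. 5 * (1 / (real n * sqrt (real n))))"
      using each by (intro order.trans[OF sum_mono sum_mono2]) auto
    also have "\<dots> = 5 * (\<Sum>n\<in>{1..M}. 1 / (real n * sqrt (real n)))"
      by (rule sum_distrib_left[symmetric])
    also have "\<dots> \<le> 15"
      using sum_inverse_power_three_halves_le[of M] by simp
    finally have "(\<Sum>n\<in>{1..<M}. count_error n * (f n - f (Suc n))) \<le> 15" .
    moreover have "{0..<M} = insert 0 {1..<M}" using False by auto
    ultimately show ?thesis using zero by (simp add: sum.insert)
  qed (use b in simp)
  have "count_error 0 * f 0 = 1 / b" by (simp add: count_error_def f_def)
  then show ?thesis using first diffs by linarith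
qed

lemma disc_sum_inverse_shift_bounds:
  assumes b: "0 < b"
  shows "(\<Sum>p\<in>{p. norm2 p \<le> int M}. 1 / (rnorm2 p + b)) \<le> 1 / b + pi * (ln (real M + b) - ln b) + 19 + 3 / b"
    and "1 / b + pi * (ln (real M + 1 + b) - ln (1 + b)) - 19 - 3 / b
      \<le> (\<Sum>p\<in>{p. norm2 p \<le> int M}. 1 / (rnorm2 p + b))"
proof -
  define f where "f n = 1 / (real n + b)" for n :: nat
  have "(0, 0) \<notin> shell 0 M" by (simp add: shell_def norm2_def)
  then have eq: "(\<Sum>p\<in>{p. norm2 p \<le> int M}. 1 / (rnorm2 p + b)) = 1 / b + (\<Sum>p\<in>shell 0 M. f (nat (norm2 p)))"
    unfolding disc_int_eq_insert_shell f_def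
    using finite_shell sum_shell_rnorm2[of "\<lambda>x. 1 / (x + b)"] by (simp add: norm2_def)
  have "\<bar>(\<Sum>p\<in>shell 0 M. f (nat (norm2 p))) - pi * (\<Sum>n\<in>{0<..M}. f n)\<bar>
      \<le> count_error M * f M + count_error 0 * f 0 + (\<Sum>n\<in>{0..<M}. count_error n * (f n - f (Suc n)))"
    by (rule shell_sum_approx) (use b in \<open>auto simp: f_def frac_le\<close>)
  also have "\<dots> \<le> 19 + 3 / b"
    unfolding f_def using shell_sum_inverse_shift_error[OF b] by simp
  finally have err: "\<bar>(\<Sum>p\<in>shell 0 M. f (nat (norm2 p))) - pi * (\<Sum>n\<in>{0<..M}. f n)\<bar> \<le> 19 + 3 / b" .
  have "(\<Sum>n\<in>{0<..M}. f n) \<le> ln (real M + b) - ln (real 0 + b)"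
    unfolding f_def by (rule sum_inverse_shift_le_ln) (use b in auto)
  then have up: "pi * (\<Sum>n\<in>{0<..M}. f n) \<le> pi * (ln (real M + b) - ln b)"
    by (simp add: mult_left_mono)
  have "ln (real M + 1 + b) - ln (real 0 + 1 + b) \<le> (\<Sum>n\<in>{0<..M}. f n)"
    unfolding f_def by (rule ln_le_sum_inverse_shift) (use b in auto)
  then have lo: "pi * (ln (real M + 1 + b) - ln (1 + b)) \<le> pi * (\<Sum>n\<in>{0<..M}. f n)"
    by (simp add: mult_left_mono)
  show "(\<Sum>p\<in>{p. norm2 p \<le> int M}. 1 / (rnorm2 p + b)) \<le> 1 / b + pi * (ln (real M + b) - ln b) + 19 + 3 / b"
    and "1 / b + pi * (ln (real M + 1 + b) - ln (1 + b)) - 19 - 3 / b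
      \<le> (\<Sum>p\<in>{p. norm2 p \<le> int M}. 1 / (rnorm2 p + b))"
    using eq abs_le_D1[OF err] abs_le_D2[OF err] up lo by linarith+
qed

lemma shell_sum_inverse_square_le:
  assumes A: "1 \<le> A" and AB: "A \<le> B"
  shows "(\<Sum>p\<in>shell A B. 1 / (rnorm2 p)^2) \<le> 59 / real A"
proof -
  define f where "f n = 1 / (real n)^2" for n :: nat
  have rA: "real A \<ge> 1" using A by simp
  have antimono: "f (Suc n) \<le> f n" if "A \<le> n" for n
    unfolding f_def using that A by (intro frac_le) (auto intro: power_mono)
  have approx: "\<bar>(\<Sum>p\<in>shell A B. f (nat (norm2 p))) - pi * (\<Sum>n\<in>{A<..B}. f n)\<bar>
      \<le> count_error B * f B + count_error A * f A + (\<Sum>n\<in>{A..<B}. count_error n * (f n - f (Suc n)))"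
    using AB antimono by (intro shell_sum_approx) (auto simp: f_def)
  have ends: "count_error n * f n \<le> 5 / real A" if "A \<le> n" for n
  proof -
    have n: "real n \<ge> 1" "real n \<ge> real A" using that A by auto
    have "sqrt (real n) \<le> real n" using n by (intro real_le_lsqrt) (auto simp: power2_eq_square)
    then have "count_error n * f n \<le> 5 * real n * f n"
      using count_error_le[of n] that A unfolding f_def by (intro mult_right_mono) auto
    also have "\<dots> = 5 / real n" unfolding f_def using n by (simp add: power2_eq_square)
    also have "\<dots> \<le> 5 / real A" using n rA by (intro divide_left_mono) auto
    finally show ?thesis .
  qed
  have each: "count_error n * (f n - f (Suc n)) \<le> 15 / real A * (1 / (real n * sqrt (real n)))"
    if "A \<le> n" for n
  proof -
    have n: "real n \<ge> 1" "real n \<ge> real A" using that A by auto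
    have "f n - f (Suc n) \<le> 3 / (real n)^3"
      unfolding f_def using inverse_square_diff_le[OF n(1)] by (simp add: add.commute)
    then have "count_error n * (f n - f (Suc n)) \<le> 5 * sqrt (real n) * (3 / (real n)^3)"
      using count_error_le[of n] that A antimono[OF that] by (intro mult_mono) (auto simp: count_error_def)
    also have "\<dots> = 15 / (real n * (real n * sqrt (real n)))"
      using n real_sqrt_mult_self[of "real n"]
      by (simp add: field_simps power3_eq_cube del: real_sqrt_mult_self)
    also have "\<dots> \<le> 15 / (real A * (real n * sqrt (real n)))"
      using n rA by (intro divide_left_mono mult_right_mono mult_pos_pos) auto
    finally show ?thesis by simp
  qed
  have "(\<Sum>n\<in>{A..<B}. count_error n * (f n - f (Suc n)))
      \<le> (\<Sum>n\<in>{1..B}. 15 / real A * (1 / (real n * sqrt (real n))))"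
    using A each by (intro order.trans[OF sum_mono sum_mono2]) auto
  also have "\<dots> = 15 / real A * (\<Sum>n\<in>{1..B}. 1 / (real n * sqrt (real n)))"
    by (rule sum_distrib_left[symmetric])
  also have "\<dots> \<le> 15 / real A * 3"
    using sum_inverse_power_three_halves_le[of B] rA by (intro mult_left_mono) auto
  finally have diffs: "(\<Sum>n\<in>{A..<B}. count_error n * (f n - f (Suc n))) \<le> 45 / real A" by simp
  have "(\<Sum>n\<in>{A<..B}. f n) \<le> 1 / real A"
    using sum_inverse_square_le[OF AB A] unfolding f_def by (smt (verit) of_nat_0_le_iff divide_nonneg_nonneg)
  then have main: "pi * (\<Sum>n\<in>{A<..B}. f n) \<le> 4 / real A"
    using pi_less_4 rA mult_mono[of pi 4 "\<Sum>n\<in>{A<..B}. f n" "1 / real A"] by (simp add: f_def sum_nonneg)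
  have "(\<Sum>p\<in>shell A B. 1 / (rnorm2 p)^2) = (\<Sum>p\<in>shell A B. f (nat (norm2 p)))"
    unfolding f_def by (rule sum_shell_rnorm2)
  then show ?thesis using abs_le_D1[OF approx] ends[of B] ends[of A] AB diffs main by simp
qed

lemma finite_sum_inverse_square_tail_le:
  assumes Y: "1 \<le> Y" and F: "finite F" "F \<subseteq> {p. Y < rnorm2 p}"
  shows "(\<Sum>p\<in>F. 1 / (rnorm2 p)^2) \<le> 118 / Y"
proof -
  define A where "A = nat \<lfloor>Y\<rfloor>"
  define B where "B = A + (\<Sum>p\<in>F. nat (norm2 p))"
  have A1: "1 \<le> A" unfolding A_def using Y by linarith
  have "F \<subseteq> shell A B"
  proof
    fix p assume p: "p \<in> F"
    then have "int A < norm2 p" unfolding A_def using F Y by (auto simp: floor_less_iff)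
    moreover have "nat (norm2 p) \<le> (\<Sum>p\<in>F. nat (norm2 p))" using p F(1) by (intro member_le_sum) auto
    then have "norm2 p \<le> int B" unfolding B_def using norm2_nonneg[of p] by linarith
    ultimately show "p \<in> shell A B" by (simp add: shell_def)
  qed
  then have "(\<Sum>p\<in>F. 1 / (rnorm2 p)^2) \<le> (\<Sum>p\<in>shell A B. 1 / (rnorm2 p)^2)"
    by (intro sum_mono2[OF finite_shell]) auto
  also have "\<dots> \<le> 59 / real A" by (rule shell_sum_inverse_square_le[OF A1]) (simp add: B_def)
  also have "\<dots> \<le> 118 / Y"
  proof -
    have "Y - 1 < real A" unfolding A_def using Y by linarith
    then have "Y \<le> 2 * real A" using A1 by linarith
    then show ?thesis using Y A1 by (simp add: field_simps)
  qed
  finally show ?thesis .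
qed

lemma summable_on_inverse_square_tail:
  "1 \<le> Y \<Longrightarrow> (\<lambda>p. c * (1 / (rnorm2 p)^2)) summable_on {p. Y < rnorm2 p}"
  by (intro summable_on_cmult_right nonneg_bdd_above_summable_on)
    (auto intro!: bdd_aboveI2 finite_sum_inverse_square_tail_le)

lemma infsum_inverse_square_tail_le:
  "1 \<le> Y \<Longrightarrow> (\<Sum>\<^sub>\<infinity>p\<in>{p. Y < rnorm2 p}. 1 / (rnorm2 p)^2) \<le> 118 / Y"
  using summable_on_inverse_square_tail[of Y 1]
  by (intro infsum_le_finite_sums finite_sum_inverse_square_tail_le) auto

lemma annulus_sum_inverse_shift_le:
  assumes R: "1 \<le> R" and D: "2 \<le> D" "sqrt R \<le> D"
  shows "(\<Sum>p\<in>{p. R < rnorm2 p \<and> rnorm2 p \<le> 2 * R}. 1 / (rnorm2 p - R + D))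
    \<le> pi * (ln (R + D) - ln (D - 1)) + 28"
proof -
  define A where "A = nat \<lfloor>R\<rfloor>"
  define B where "B = nat \<lfloor>2 * R\<rfloor>"
  define f where "f n = 1 / (real n - R + D)" for n :: nat
  have AB: "A \<le> B" unfolding A_def B_def using R by (simp add: floor_mono nat_mono)
  have Ble: "real B \<le> 2 * R" unfolding B_def using R by linarith
  have pos: "D - 1 < real n - R + D" if "A \<le> n" for n using that R unfolding A_def by linarith
  have fpos: "0 < real n - R + D" if "A \<le> n" for n using pos[OF that] D by linarith
  have approx: "\<bar>(\<Sum>p\<in>shell A B. f (nat (norm2 p))) - pi * (\<Sum>n\<in>{A<..B}. f n)\<bar> \<le> 2 * count_error B * f A"
    using AB fpos less_imp_le[OF fpos] by (intro shell_sum_approx_antimono) (auto simp: f_def intro!: frac_le)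
  have "sqrt (real B) \<le> 3 / 2 * sqrt R"
  proof -
    have "(3 / 2 * sqrt R)^2 = 9 / 4 * R" using R by (simp add: power_mult_distrib power2_eq_square)
    then have "2 * R \<le> (3 / 2 * sqrt R)^2" using R by simp
    then have "sqrt (2 * R) \<le> 3 / 2 * sqrt R" by (rule real_le_lsqrt[rotated]) (use R in simp)
    then show ?thesis using Ble order.trans real_sqrt_le_mono by blast
  qed
  moreover have "1 \<le> sqrt R" using R by simp
  ultimately have "count_error B \<le> 7 * sqrt R" unfolding count_error_def by linarith
  moreover have "f A \<le> 2 / D" unfolding f_def using pos[of A] D by (simp add: field_simps)
  ultimately have "2 * count_error B * f A \<le> 2 * (7 * sqrt R) * (2 / D)"
    using pos[of A] D R by (intro mult_mono) (auto simp: f_def count_error_def)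
  also have "\<dots> \<le> 28" using D by (simp add: divide_le_eq)
  finally have err: "2 * count_error B * f A \<le> 28" .
  have "(\<Sum>n\<in>{A<..B}. f n) \<le> ln (real B + (D - R)) - ln (real A + (D - R))"
    unfolding f_def using sum_inverse_shift_le_ln[OF AB, of "D - R"] pos[of A] D
    by (simp add: algebra_simps)
  also have "\<dots> \<le> ln (R + D) - ln (D - 1)"
    using Ble pos[OF AB] pos[of A] D by (intro diff_mono) (simp_all add: algebra_simps)
  finally have main: "pi * (\<Sum>n\<in>{A<..B}. f n) \<le> pi * (ln (R + D) - ln (D - 1))"
    by (simp add: mult_left_mono)
  have set: "{p. R < rnorm2 p \<and> rnorm2 p \<le> 2 * R} = shell A B"
    unfolding A_def B_def using R by (intro shell_floor[symmetric]) auto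
  have "(\<Sum>p\<in>shell A B. 1 / (rnorm2 p - R + D)) = (\<Sum>p\<in>shell A B. f (nat (norm2 p)))"
    unfolding f_def by (rule sum_shell_rnorm2)
  then show ?thesis unfolding set using abs_le_D1[OF approx] err main by linarith
qed

section \<open>The rescaled function \<open>G\<^sub>\<mu>\<close>\<close>

text \<open>In units of \<open>(2\<pi>/L)\<^sup>2\<close> the function \<open>G\<^sub>\<mu>\<close> becomes \<open>G_scaled b R\<close> with
  \<open>b = |E\<^sub>B|/(2\<pi>/L)\<^sup>2\<close> and \<open>R = \<mu>/(2\<pi>/L)\<^sup>2\<close>; see \<open>Gmu_eq_G_scaled\<close>.\<close>

definition G_scaled :: "real \<Rightarrow> real \<Rightarrow> real \<Rightarrow> real" where
  "G_scaled b R t = (\<Sum>\<^sub>\<infinity>p\<in>UNIV. 1 / (rnorm2 p + b) - (if R < rnorm2 p then 1 / (rnorm2 p + t) else 0))"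

definition G_tail :: "real \<Rightarrow> real \<Rightarrow> real \<Rightarrow> real" where
  "G_tail b R t = (\<Sum>\<^sub>\<infinity>p\<in>{p. R < rnorm2 p}. 1 / (rnorm2 p + b) - 1 / (rnorm2 p + t))"

lemma shifted_norm_lower_bound:
  fixes q t R D :: real
  assumes "0 \<le> R" "0 < D" "R < q" "-R + D \<le> t"
  shows "q * D / (R + D) \<le> q + t"
proof -
  have "(q - R + D) * (R + D) - q * D = (q - R) * R + D * D" by (simp add: algebra_simps)
  also have "\<dots> \<ge> 0" using assms by simp
  finally have "q * D \<le> (q - R + D) * (R + D)" by simp
  then have "q * D / (R + D) \<le> q - R + D" using assms by (simp add: divide_le_eq)
  then show ?thesis using assms by linarith
qed

lemma G_tail_term_bound:
  assumes R: "1 \<le> R" and b: "0 < b" and D: "0 < D" and t: "-R + D \<le> t" and p: "R < rnorm2 p"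
  shows "\<bar>1 / (rnorm2 p + b) - 1 / (rnorm2 p + t)\<bar> \<le> (\<bar>t - b\<bar> * (R + D) / D) * (1 / (rnorm2 p)^2)"
proof -
  let ?q = "rnorm2 p"
  have q: "0 < ?q" using p R by linarith
  have qt: "?q * D / (R + D) \<le> ?q + t" using shifted_norm_lower_bound[OF _ D p t] R by simp
  have qt0: "0 < ?q * D / (R + D)" using q R D by (intro divide_pos_pos mult_pos_pos) auto
  have "\<bar>1 / (?q + b) - 1 / (?q + t)\<bar> = \<bar>t - b\<bar> / ((?q + b) * (?q + t))"
    using q b qt qt0 by (simp add: diff_frac_eq abs_div)
  also have "\<dots> \<le> \<bar>t - b\<bar> / (?q * (?q * D / (R + D)))"
    using q b qt qt0 by (intro divide_left_mono mult_mono mult_pos_pos) auto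
  also have "\<dots> = (\<bar>t - b\<bar> * (R + D) / D) * (1 / ?q^2)"
    using q D R by (simp add: field_simps power2_eq_square)
  finally show ?thesis .
qed

lemma summable_on_G_tail:
  assumes R: "1 \<le> R" and b: "0 < b" and t: "-R < t"
  shows "(\<lambda>p. 1 / (rnorm2 p + b) - 1 / (rnorm2 p + t)) summable_on {p. R < rnorm2 p}"
proof -
  define K where "K = \<bar>t - b\<bar> * (R + R + t) / (R + t)"
  have "(\<lambda>p. norm (K * (1 / (rnorm2 p)^2))) summable_on {p. R < rnorm2 p}"
    by (rule summable_on_iff_abs_summable_on_real[THEN iffD1, OF summable_on_inverse_square_tail[OF R]])
  then have "(\<lambda>p. norm (1 / (rnorm2 p + b) - 1 / (rnorm2 p + t))) summable_on {p. R < rnorm2 p}"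
  proof (rule Infinite_Sum.abs_summable_on_comparison_test)
    fix p assume "p \<in> {p. R < rnorm2 p}"
    then have "\<bar>1 / (rnorm2 p + b) - 1 / (rnorm2 p + t)\<bar> \<le> K * (1 / (rnorm2 p)^2)"
      using G_tail_term_bound[OF R b, of "R + t" t p] t unfolding K_def by simp
    then have "\<bar>1 / (rnorm2 p + b) - 1 / (rnorm2 p + t)\<bar> \<le> \<bar>K * (1 / (rnorm2 p)^2)\<bar>"
      using abs_ge_self order_trans by blast
    then show "norm (1 / (rnorm2 p + b) - 1 / (rnorm2 p + t)) \<le> norm (K * (1 / (rnorm2 p)^2))"
      by simp
  qed
  then show ?thesis by (rule summable_on_iff_abs_summable_on_real[THEN iffD2])
qed

lemma G_scaled_eq_disc_sum_plus_tail:
  assumes R: "1 \<le> R" and b: "0 < b" and t: "-R < t"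
  shows "G_scaled b R t = (\<Sum>p\<in>{p. rnorm2 p \<le> R}. 1 / (rnorm2 p + b)) + G_tail b R t"
proof -
  define g where "g p = 1 / (rnorm2 p + b) - (if R < rnorm2 p then 1 / (rnorm2 p + t) else 0)" for p
  have inner: "g p = 1 / (rnorm2 p + b)" if "p \<in> {p. rnorm2 p \<le> R}" for p
    using that unfolding g_def by simp
  have outer: "g p = 1 / (rnorm2 p + b) - 1 / (rnorm2 p + t)" if "p \<in> {p. R < rnorm2 p}" for p
    using that unfolding g_def by simp
  have "g summable_on {p. R < rnorm2 p}
      \<longleftrightarrow> (\<lambda>p. 1 / (rnorm2 p + b) - 1 / (rnorm2 p + t)) summable_on {p. R < rnorm2 p}"
    by (rule summable_on_cong) (rule outer)
  then have tail: "g summable_on {p. R < rnorm2 p}" using summable_on_G_tail[OF R b t] by simp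
  have "infsum g ({p. rnorm2 p \<le> R} \<union> {p. R < rnorm2 p})
      = infsum g {p. rnorm2 p \<le> R} + infsum g {p. R < rnorm2 p}"
    by (rule infsum_Un_disjoint[OF summable_on_finite[OF finite_disc] tail]) auto
  moreover have "{p. rnorm2 p \<le> R} \<union> {p. R < rnorm2 p} = UNIV" by auto
  moreover have "infsum g {p. rnorm2 p \<le> R} = (\<Sum>p\<in>{p. rnorm2 p \<le> R}. 1 / (rnorm2 p + b))"
    unfolding infsum_finite[OF finite_disc] by (rule sum.cong[OF refl inner])
  moreover have "infsum g {p. R < rnorm2 p} = G_tail b R t"
    unfolding G_tail_def by (rule infsum_cong[OF outer])
  ultimately show ?thesis unfolding G_scaled_def g_def[symmetric] by simp
qed

lemma G_tail_mono:
  assumes R: "1 \<le> R" and b: "0 < b" and t: "-R < t" "t \<le> t'"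
  shows "G_tail b R t \<le> G_tail b R t'"
  unfolding G_tail_def
proof (rule infsum_mono)
  show "(\<lambda>p. 1 / (rnorm2 p + b) - 1 / (rnorm2 p + t)) summable_on {p. R < rnorm2 p}"
    "(\<lambda>p. 1 / (rnorm2 p + b) - 1 / (rnorm2 p + t')) summable_on {p. R < rnorm2 p}"
    using summable_on_G_tail[OF R b] t by auto
  fix p assume "p \<in> {p. R < rnorm2 p}"
  then have "0 < rnorm2 p + t" using t by simp
  then show "1 / (rnorm2 p + b) - 1 / (rnorm2 p + t) \<le> 1 / (rnorm2 p + b) - 1 / (rnorm2 p + t')"
    using t by (simp add: frac_le)
qed

lemma G_tail_le:
  assumes R: "1 \<le> R" and b: "0 < b" and t: "-R < t" "t \<le> R"
  shows "G_tail b R t \<le> 118"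
proof -
  have "G_tail b R t \<le> (\<Sum>\<^sub>\<infinity>p\<in>{p. R < rnorm2 p}. R * (1 / (rnorm2 p)^2))"
    unfolding G_tail_def
  proof (rule infsum_mono[OF summable_on_G_tail[OF R b t(1)] summable_on_inverse_square_tail[OF R]])
    fix p assume "p \<in> {p. R < rnorm2 p}"
    then have q: "0 < rnorm2 p" "R < rnorm2 p" using R by auto
    show "1 / (rnorm2 p + b) - 1 / (rnorm2 p + t) \<le> R * (1 / (rnorm2 p)^2)"
    proof (cases "t \<le> b")
      case True
      then have "1 / (rnorm2 p + b) \<le> 1 / (rnorm2 p + t)" using q t by (intro frac_le) auto
      then show ?thesis using R by (smt (verit) divide_nonneg_nonneg mult_nonneg_nonneg zero_le_power2)
    next
      case False
      have "1 / (rnorm2 p + b) - 1 / (rnorm2 p + t) = (t - b) / ((rnorm2 p + b) * (rnorm2 p + t))"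
        using q b False by (simp add: diff_frac_eq)
      also have "\<dots> \<le> R / (rnorm2 p * rnorm2 p)"
        using q b False t by (intro frac_le mult_mono) auto
      finally show ?thesis by (simp add: power2_eq_square)
    qed
  qed
  also have "\<dots> = R * (\<Sum>\<^sub>\<infinity>p\<in>{p. R < rnorm2 p}. 1 / (rnorm2 p)^2)" by (rule infsum_cmult_right')
  also have "\<dots> \<le> R * (118 / R)" using infsum_inverse_square_tail_le[OF R] R by (intro mult_left_mono) auto
  finally show ?thesis using R by simp
qed

lemma G_tail_term_ge:
  fixes q :: real
  assumes b: "0 < b" "b \<le> R" and D: "0 < D" "D \<le> R" and q: "R < q"
  shows "- (if q \<le> 2 * R then 2 / (q - R + D) else 4 * R * (1 / q^2)) \<le> 1 / (q + b) - 1 / (q - R + D)"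
proof -
  have q0: "0 < q" "0 < q - R + D" using b D q by auto
  have "- (2 * R) / (q * (q - R + D)) \<le> (-R + D - b) / (q * (q - R + D))"
    using b D q0 by (intro divide_right_mono) auto
  also have "\<dots> \<le> (-R + D - b) / ((q + b) * (q - R + D))"
    using b D q0 by (intro divide_left_mono_neg mult_right_mono mult_pos_pos) auto
  also have "\<dots> = 1 / (q + b) - 1 / (q - R + D)"
    using b q0 by (simp add: diff_frac_eq)
  finally have low: "- (2 * R) / (q * (q - R + D)) \<le> 1 / (q + b) - 1 / (q - R + D)" .
  have "2 * R / (q * (q - R + D)) \<le> (if q \<le> 2 * R then 2 / (q - R + D) else 4 * R * (1 / q^2))"
  proof (cases "q \<le> 2 * R")
    case True
    have "2 * R / (q * (q - R + D)) \<le> 2 * R / (R * (q - R + D))"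
      using q q0 b by (intro divide_left_mono mult_right_mono mult_pos_pos) auto
    then show ?thesis using True b by simp
  next
    case False
    have "2 * R / (q * (q - R + D)) \<le> 2 * R / (q * (q / 2))"
      using False q0 b D by (intro divide_left_mono mult_left_mono mult_pos_pos) auto
    then show ?thesis using False by (simp add: power2_eq_square)
  qed
  then show ?thesis using low by simp
qed

lemma G_tail_ge:
  assumes R: "1 \<le> R" and b: "0 < b" "b \<le> R" and D: "2 \<le> D" "sqrt R \<le> D" "D \<le> R"
    and t: "-R + D \<le> t"
  shows "- (2 * (pi * (ln (R + D) - ln (D - 1)) + 28) + 236) \<le> G_tail b R t"
proof -
  define w where "w p = (if rnorm2 p \<le> 2 * R then 2 / (rnorm2 p - R + D) else 4 * R * (1 / (rnorm2 p)^2))" for p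
  define Ann where "Ann = {p. R < rnorm2 p \<and> rnorm2 p \<le> 2 * R}"
  have R2: "1 \<le> 2 * R" using R by simp
  have finAnn: "finite Ann" unfolding Ann_def by (rule finite_subset[OF _ finite_disc[of "2 * R"]]) auto
  have split: "{p. R < rnorm2 p} = Ann \<union> {p. 2 * R < rnorm2 p}" unfolding Ann_def using R by auto
  have far: "w p = 4 * R * (1 / (rnorm2 p)^2)" if "p \<in> {p. 2 * R < rnorm2 p}" for p
    using that unfolding w_def by simp
  have "w summable_on {p. 2 * R < rnorm2 p}
      \<longleftrightarrow> (\<lambda>p. 4 * R * (1 / (rnorm2 p)^2)) summable_on {p. 2 * R < rnorm2 p}"
    by (rule summable_on_cong) (rule far)
  then have far_summable: "w summable_on {p. 2 * R < rnorm2 p}"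
    using summable_on_inverse_square_tail[OF R2] by simp
  have "infsum w Ann = 2 * (\<Sum>p\<in>Ann. 1 / (rnorm2 p - R + D))"
    unfolding infsum_finite[OF finAnn] sum_distrib_left by (intro sum.cong refl) (simp add: w_def Ann_def)
  also have "\<dots> \<le> 2 * (pi * (ln (R + D) - ln (D - 1)) + 28)"
    using annulus_sum_inverse_shift_le[OF R D(1,2)] unfolding Ann_def by simp
  finally have w_Ann: "infsum w Ann \<le> 2 * (pi * (ln (R + D) - ln (D - 1)) + 28)" .
  have "infsum w {p. 2 * R < rnorm2 p} = (\<Sum>\<^sub>\<infinity>p\<in>{p. 2 * R < rnorm2 p}. 4 * R * (1 / (rnorm2 p)^2))"
    by (rule infsum_cong[OF far])
  also have "\<dots> = 4 * R * (\<Sum>\<^sub>\<infinity>p\<in>{p. 2 * R < rnorm2 p}. 1 / (rnorm2 p)^2)"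
    by (rule infsum_cmult_right')
  also have "\<dots> \<le> 4 * R * (118 / (2 * R))"
    using infsum_inverse_square_tail_le[OF R2] R by (intro mult_left_mono) auto
  finally have w_far: "infsum w {p. 2 * R < rnorm2 p} \<le> 236" using R by simp
  have w_summable: "w summable_on {p. R < rnorm2 p}"
    unfolding split by (rule summable_on_Un_disjoint[OF summable_on_finite[OF finAnn] far_summable])
      (auto simp: Ann_def)
  have w_split: "infsum w {p. R < rnorm2 p} = infsum w Ann + infsum w {p. 2 * R < rnorm2 p}"
    unfolding split by (rule infsum_Un_disjoint[OF summable_on_finite[OF finAnn] far_summable])
      (auto simp: Ann_def)
  have "- infsum w {p. R < rnorm2 p} = infsum (\<lambda>p. - w p) {p. R < rnorm2 p}"
    by (rule infsum_uminus[symmetric])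
  also have "\<dots> \<le> G_tail b R (-R + D)"
    unfolding G_tail_def
  proof (rule infsum_mono)
    show "(\<lambda>p. - w p) summable_on {p. R < rnorm2 p}" using w_summable summable_on_uminus by blast
    show "(\<lambda>p. 1 / (rnorm2 p + b) - 1 / (rnorm2 p + (- R + D))) summable_on {p. R < rnorm2 p}"
      using summable_on_G_tail[OF R b(1), of "-R + D"] D by simp
    fix p assume "p \<in> {p. R < rnorm2 p}"
    then show "- w p \<le> 1 / (rnorm2 p + b) - 1 / (rnorm2 p + (- R + D))"
      using G_tail_term_ge[OF b, of D "rnorm2 p"] D unfolding w_def by (simp add: algebra_simps)
  qed
  also have "\<dots> \<le> G_tail b R t" using R b t D by (intro G_tail_mono) auto
  finally show ?thesis using w_split w_Ann w_far by linarith
qed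

lemma G_tail_lipschitz:
  assumes R: "1 \<le> R" and b: "0 < b" and D: "0 < D" and t: "-R + D \<le> t" "-R + D \<le> t'"
  shows "\<bar>G_tail b R t - G_tail b R t'\<bar> \<le> (((R + D) / D)^2 * (118 / R)) * \<bar>t - t'\<bar>"
proof -
  define K where "K = ((R + D) / D)^2"
  define d where "d p = 1 / (rnorm2 p + t') - 1 / (rnorm2 p + t)" for p
  have s: "(\<lambda>p. 1 / (rnorm2 p + b) - 1 / (rnorm2 p + s)) summable_on {p. R < rnorm2 p}"
    if "-R + D \<le> s" for s
    using that D by (intro summable_on_G_tail[OF R b]) linarith
  have s_neg: "(\<lambda>p. - (1 / (rnorm2 p + b) - 1 / (rnorm2 p + t'))) summable_on {p. R < rnorm2 p}"
    by (rule summable_on_uminus[THEN iffD2, OF s[OF t(2)]])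
  have d_eq: "d = (\<lambda>p. (1 / (rnorm2 p + b) - 1 / (rnorm2 p + t)) + - (1 / (rnorm2 p + b) - 1 / (rnorm2 p + t')))"
    unfolding d_def by (rule ext) simp
  have d_summable: "d summable_on {p. R < rnorm2 p}"
    unfolding d_eq by (rule summable_on_add[OF s[OF t(1)] s_neg])
  have "infsum d {p. R < rnorm2 p}
      = G_tail b R t + (\<Sum>\<^sub>\<infinity>p\<in>{p. R < rnorm2 p}. - (1 / (rnorm2 p + b) - 1 / (rnorm2 p + t')))"
    unfolding d_eq G_tail_def by (rule infsum_add[OF s[OF t(1)] s_neg])
  also have "(\<Sum>\<^sub>\<infinity>p\<in>{p. R < rnorm2 p}. - (1 / (rnorm2 p + b) - 1 / (rnorm2 p + t'))) = - G_tail b R t'"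
    unfolding G_tail_def by (rule infsum_uminus)
  finally have "\<bar>G_tail b R t - G_tail b R t'\<bar> = \<bar>infsum d {p. R < rnorm2 p}\<bar>" by simp
  also have "\<dots> \<le> infsum (\<lambda>p. norm (d p)) {p. R < rnorm2 p}"
    using norm_infsum_bound[of d] summable_on_iff_abs_summable_on_real[THEN iffD1, OF d_summable]
    by simp
  also have "\<dots> \<le> infsum (\<lambda>p. (K * \<bar>t - t'\<bar>) * (1 / (rnorm2 p)^2)) {p. R < rnorm2 p}"
  proof (rule infsum_mono[OF summable_on_iff_abs_summable_on_real[THEN iffD1, OF d_summable]
        summable_on_inverse_square_tail[OF R]])
    fix p assume "p \<in> {p. R < rnorm2 p}"
    then have p: "R < rnorm2 p" by simp
    let ?c = "rnorm2 p * D / (R + D)"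
    have a: "?c \<le> rnorm2 p + t" "?c \<le> rnorm2 p + t'"
      using shifted_norm_lower_bound[OF _ D p] t R by auto
    have c: "0 < ?c" using p R D by (intro divide_pos_pos mult_pos_pos) auto
    have "norm (d p) = \<bar>t - t'\<bar> / ((rnorm2 p + t) * (rnorm2 p + t'))"
      unfolding d_def using a c by (simp add: diff_frac_eq abs_div abs_minus_commute)
    also have "\<dots> \<le> \<bar>t - t'\<bar> / (?c * ?c)"
      using a c by (intro divide_left_mono mult_mono mult_pos_pos) auto
    also have "\<dots> = (K * \<bar>t - t'\<bar>) * (1 / (rnorm2 p)^2)"
      unfolding K_def using p R D by (simp add: field_simps power2_eq_square)
    finally show "norm (d p) \<le> (K * \<bar>t - t'\<bar>) * (1 / (rnorm2 p)^2)" .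
  qed
  also have "\<dots> = (K * \<bar>t - t'\<bar>) * (\<Sum>\<^sub>\<infinity>p\<in>{p. R < rnorm2 p}. 1 / (rnorm2 p)^2)"
    by (rule infsum_cmult_right')
  also have "\<dots> \<le> (K * \<bar>t - t'\<bar>) * (118 / R)"
    using infsum_inverse_square_tail_le[OF R] unfolding K_def by (intro mult_left_mono) auto
  finally show ?thesis unfolding K_def by (simp add: algebra_simps)
qed

lemma continuous_on_G_scaled:
  assumes R: "1 \<le> R" and b: "0 < b" and D: "0 < D"
  shows "continuous_on {-R + D..} (G_scaled b R)"
proof -
  have "(((R + D) / D)^2 * (118 / R))-lipschitz_on {-R + D..} (G_tail b R)"
    using G_tail_lipschitz[OF R b D] R by (intro lipschitz_onI) (auto simp: dist_real_def)
  then have "continuous_on {-R + D..} (\<lambda>t. (\<Sum>p\<in>{p. rnorm2 p \<le> R}. 1 / (rnorm2 p + b)) + G_tail b R t)"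
    by (intro continuous_on_add continuous_on_const lipschitz_on_continuous_on)
  moreover have "G_scaled b R t = (\<Sum>p\<in>{p. rnorm2 p \<le> R}. 1 / (rnorm2 p + b)) + G_tail b R t"
    if "t \<in> {-R + D..}" for t
    using G_scaled_eq_disc_sum_plus_tail[OF R b] that D by simp
  ultimately show ?thesis using continuous_on_cong[OF refl] by (metis (no_types, lifting))
qed

lemma continuous_on_G_scaled_reflected:
  assumes R: "1 \<le> R" and b: "0 < b" and D: "0 < D" and c: "-R + D \<le> c - y"
  shows "continuous_on {x..y} (\<lambda>e. G_scaled b R (c - e))"
proof (rule continuous_on_compose2[OF continuous_on_G_scaled[OF R b D]])
  show "(\<lambda>e. c - e) ` {x..y} \<subseteq> {-R + D..}" using c by auto
qed (intro continuous_intros)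

lemma G_scaled_le:
  assumes R: "1 \<le> R" and b: "0 < b" "1 / b \<le> 64" "b \<le> R" and t: "-R < t" "t \<le> R"
  shows "G_scaled b R t \<le> pi * ln (R / b) + 400"
proof -
  define M where "M = nat \<lfloor>R\<rfloor>"
  have "(\<Sum>p\<in>{p. rnorm2 p \<le> R}. 1 / (rnorm2 p + b)) \<le> 1 / b + pi * (ln (real M + b) - ln b) + 19 + 3 / b"
    unfolding disc_floor[OF order_trans[OF zero_le_one R]] M_def[symmetric]
    by (rule disc_sum_inverse_shift_bounds(1)[OF b(1)])
  moreover have "ln (real M + b) \<le> ln 2 + ln R"
  proof -
    have "real M \<le> R" unfolding M_def using R by linarith
    then have "ln (real M + b) \<le> ln (2 * R)" using b R by (subst ln_le_cancel_iff) auto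
    then show ?thesis using R by (simp add: ln_mult)
  qed
  then have "pi * (ln (real M + b) - ln b) \<le> pi * ln 2 + pi * ln (R / b)"
    using R b by (simp add: ln_div distrib_left[symmetric])
  moreover have "pi * ln 2 \<le> 4" using ln_2_less_1 pi_less_4 mult_strict_mono[of pi 4 "ln 2" 1] by simp
  moreover have "G_tail b R t \<le> 118" by (rule G_tail_le[OF R b(1) t])
  ultimately show ?thesis using G_scaled_eq_disc_sum_plus_tail[OF R b(1) t(1)] b(2) by linarith
qed

lemma G_scaled_ge:
  assumes R: "1 \<le> R" and b: "0 < b" "1 / b \<le> 64" "b \<le> R" and D: "2 \<le> D" "sqrt R \<le> D" "D \<le> R"
    and t: "-R + D \<le> t"
  shows "pi * ln (R / b) - 711 - 8 * (ln R - ln D) \<le> G_scaled b R t"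
proof -
  define M where "M = nat \<lfloor>R\<rfloor>"
  have disc: "1 / b + pi * (ln (real M + 1 + b) - ln (1 + b)) - 19 - 3 / b
      \<le> (\<Sum>p\<in>{p. rnorm2 p \<le> R}. 1 / (rnorm2 p + b))"
    unfolding disc_floor[OF order_trans[OF zero_le_one R]] M_def[symmetric]
    by (rule disc_sum_inverse_shift_bounds(2)[OF b(1)])
  have "R < real M + 1" unfolding M_def using R by linarith
  then have "ln R \<le> ln (real M + 1 + b)" using b R by (subst ln_le_cancel_iff) auto
  moreover have "ln (1 + b) \<le> ln b + 64"
  proof -
    have "ln (1 + b) - ln b = ln (1 + 1 / b)" using b by (simp add: ln_div field_simps)
    also have "\<dots> \<le> 1 / b" using b by (intro ln_add_one_self_le_self) simp
    finally show ?thesis using b by linarith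
  qed
  moreover have "ln (R / b) = ln R - ln b" using R b by (simp add: ln_div)
  ultimately have "ln (R / b) - 64 \<le> ln (real M + 1 + b) - ln (1 + b)" by linarith
  then have "pi * (ln (R / b) - 64) \<le> pi * (ln (real M + 1 + b) - ln (1 + b))"
    by (simp add: mult_left_mono)
  then have disc': "pi * ln (R / b) - 403 \<le> (\<Sum>p\<in>{p. rnorm2 p \<le> R}. 1 / (rnorm2 p + b))"
    using disc b pi_less_4 by (simp add: algebra_simps)
  have "ln (R + D) \<le> 1 + ln R"
  proof -
    have "ln (R + D) \<le> ln (2 * R)" using D R by (subst ln_le_cancel_iff) auto
    then show ?thesis using R ln_2_less_1 by (simp add: ln_mult)
  qed
  moreover have "ln D - 1 \<le> ln (D - 1)"
  proof -
    have "ln (D / 2) \<le> ln (D - 1)" using D by (subst ln_le_cancel_iff) auto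
    then show ?thesis using D ln_2_less_1 by (simp add: ln_div)
  qed
  ultimately have "ln (R + D) - ln (D - 1) \<le> 2 + (ln R - ln D)" by linarith
  moreover have "0 \<le> ln (R + D) - ln (D - 1)" using D R by simp
  ultimately have "pi * (ln (R + D) - ln (D - 1)) \<le> 4 * (2 + (ln R - ln D))"
    using pi_less_4 by (intro mult_mono) auto
  then have "2 * (pi * (ln (R + D) - ln (D - 1)) + 28) + 236 \<le> 308 + 8 * (ln R - ln D)" by simp
  then have "- (308 + 8 * (ln R - ln D)) \<le> G_tail b R t"
    using G_tail_ge[OF R b(1,3) D t] by simp
  then show ?thesis using G_scaled_eq_disc_sum_plus_tail[OF R b(1), of t] t D disc' by simp
qed

section \<open>The least solution of the rescaled polaron equation\<close>

lemma ln_large_bounds: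
  assumes a: "2 * 10^7 \<le> (a::real)"
  shows "1 \<le> ln a" "2000 * ln a \<le> a"
proof -
  have "ln 4 \<le> ln a" using a by (subst ln_le_cancel_iff) auto
  moreover have "ln (4::real) = 2 * ln 2" using ln_realpow[of 2 2] by simp
  ultimately show "1 \<le> ln a" using ln2_ge_two_thirds by linarith
  have a0: "0 < a" using a by simp
  have "ln (sqrt a) \<le> sqrt a" using a0 by (intro ln_bound) simp
  then have l: "ln a \<le> 2 * sqrt a" using a0 by (simp add: ln_sqrt)
  have "(4000::real)^2 \<le> a" using a by simp
  then have "4000 \<le> sqrt a" by (rule real_le_rsqrt)
  then have "4000 * sqrt a \<le> sqrt a * sqrt a" using a0 by (intro mult_right_mono) auto
  then have "4000 * sqrt a \<le> a" using a0 by simp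
  then show "2000 * ln a \<le> a" using l by linarith
qed

lemma ratio_large_bounds:
  fixes b R :: real
  assumes b: "0 < b" "1 / b \<le> 64" and R: "0 < R" and a: "0 \<le> ln (R / b)"
  shows "((ln (R / b))^2 / 128)^2 \<le> R" "b \<le> R"
proof -
  define a where "a = ln (R / b)"
  have "R / b = exp a" unfolding a_def using R b by simp
  then have R_exp: "R = b * exp a" using b by (simp add: field_simps)
  have "a / 4 \<le> exp (a / 4)" using exp_ge_add_one_self[of "a/4"] by linarith
  then have "(a / 4)^4 \<le> exp (a / 4) ^ 4" using a unfolding a_def[symmetric] by (intro power_mono) auto
  also have "exp (a / 4) ^ 4 = exp a" using exp_of_nat_mult[of 4 "a/4"] by simp
  finally have e: "(a / 4)^4 \<le> exp a" .
  have "b \<ge> 1 / 64" using b by (simp add: divide_le_eq mult.commute)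
  then have "exp a / 64 \<le> R" unfolding R_exp by (simp add: mult_right_mono)
  moreover have "(a^2 / 128)^2 = (a / 4)^4 / 64" by (simp add: power2_eq_square power4_eq_xxxx)
  ultimately show "((ln (R / b))^2 / 128)^2 \<le> R" unfolding a_def[symmetric] using e by linarith
  have "1 \<le> exp a" using a unfolding a_def[symmetric] by simp
  then show "b \<le> R" unfolding R_exp using b by (simp add: mult_le_cancel_left1)
qed

lemma least_zero_in_interval:
  fixes F :: "real \<Rightarrow> real"
  assumes xy: "x \<le> y" and cont: "continuous_on {x..y} F" and sign: "F y \<le> 0" "0 \<le> F x"
  obtains z where "z \<in> {x..y}" "F z = 0" "\<And>z'. z' \<in> {x..y} \<Longrightarrow> F z' = 0 \<Longrightarrow> z \<le> z'"
proof -
  define Z where "Z = {z \<in> {x..y}. F z = 0}"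
  have "closed Z" unfolding Z_def
    by (rule continuous_closed_preimage_constant[OF cont closed_atLeastAtMost])
  then have "compact ({x..y} \<inter> Z)" by (rule compact_Int_closed[OF compact_Icc])
  moreover have "{x..y} \<inter> Z = Z" unfolding Z_def by auto
  ultimately have Z_compact: "compact Z" by simp
  obtain z0 where "x \<le> z0" "z0 \<le> y" "F z0 = 0"
    using IVT2'[of F y 0 x, OF sign _ cont] xy by auto
  then have "Z \<noteq> {}" unfolding Z_def by auto
  then obtain z where z: "z \<in> Z" "\<And>z'. z' \<in> Z \<Longrightarrow> z \<le> z'"
    using compact_attains_inf[OF Z_compact] by blast
  show thesis
  proof (rule that)
    show "z \<in> {x..y}" "F z = 0" using z(1) unfolding Z_def by auto
    show "z \<le> z'" if "z' \<in> {x..y}" "F z' = 0" for z' using z(2) that unfolding Z_def by simp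
  qed
qed

lemma least_solution_of_inverse_sum_eq:
  fixes g :: "'a \<Rightarrow> real \<Rightarrow> real"
  assumes I: "finite I" and UX: "U \<le> X" and gL: "0 < gL" and gU: "0 < gU"
    and X: "real (card I) / gL \<le> X" and U: "U \<le> real (card I) / gU"
    and g_lower: "\<And>p e. p \<in> I \<Longrightarrow> e \<le> -U \<Longrightarrow> gL \<le> g p e"
    and g_upper: "\<And>p e. p \<in> I \<Longrightarrow> -X \<le> e \<Longrightarrow> e \<le> -U \<Longrightarrow> g p e \<le> gU"
    and cont: "\<And>p. p \<in> I \<Longrightarrow> continuous_on {-X..-U} (g p)"
  obtains e where "-X \<le> e" "e \<le> -U" "-e = (\<Sum>p\<in>I. inverse (g p e))"
    "\<And>e'. -e' = (\<Sum>p\<in>I. inverse (g p e')) \<Longrightarrow> e \<le> e'"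
proof -
  define F where "F e = - e - (\<Sum>p\<in>I. inverse (g p e))" for e
  have g_pos: "0 < g p e" if "p \<in> I" "e \<le> -U" for p e
    using g_lower[OF that] gL by linarith
  have sum_le: "(\<Sum>p\<in>I. inverse (g p e)) \<le> X" if "e \<le> -U" for e
  proof -
    have "(\<Sum>p\<in>I. inverse (g p e)) \<le> (\<Sum>p\<in>I. inverse gL)"
      using g_lower that gL by (intro sum_mono le_imp_inverse_le) auto
    then show ?thesis using X by (simp add: divide_inverse)
  qed
  have "U \<le> (\<Sum>p\<in>I. inverse gU)" using U by (simp add: divide_inverse)
  also have "\<dots> \<le> (\<Sum>p\<in>I. inverse (g p (-U)))"
  proof (intro sum_mono le_imp_inverse_le)
    fix p assume "p \<in> I"
    then show "g p (-U) \<le> gU" "0 < g p (-U)" using g_upper[of p "-U"] g_pos[of p "-U"] UX by auto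
  qed
  finally have FU: "F (-U) \<le> 0" unfolding F_def by simp
  have FX: "0 \<le> F (-X)" unfolding F_def using sum_le[of "-X"] UX by simp
  have contF: "continuous_on {-X..-U} F"
    unfolding F_def[abs_def]
  proof (intro continuous_on_diff continuous_on_minus continuous_on_id continuous_on_sum
      continuous_on_inverse)
    fix p assume "p \<in> I"
    then show "continuous_on {-X..-U} (g p)" "\<forall>e\<in>{-X..-U}. g p e \<noteq> 0"
      using cont g_pos by (auto simp: less_imp_neq[symmetric])
  qed
  have "-X \<le> -U" using UX by simp
  then obtain e where e: "e \<in> {-X..-U}" "F e = 0"
    and least: "\<And>e'. e' \<in> {-X..-U} \<Longrightarrow> F e' = 0 \<Longrightarrow> e \<le> e'"
    by (rule least_zero_in_interval[OF _ contF FU FX]) blast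
  show thesis
  proof
    show "-X \<le> e" "e \<le> -U" "-e = (\<Sum>p\<in>I. inverse (g p e))" using e unfolding F_def by auto
    fix e' assume e': "-e' = (\<Sum>p\<in>I. inverse (g p e'))"
    show "e \<le> e'"
    proof (cases "e' < -X \<or> -U < e'")
      case True
      then show ?thesis
      proof
        assume "e' < -X"
        then show ?thesis using sum_le[of e'] e' UX by linarith
      qed (use e(1) in simp)
    next
      case False
      then show ?thesis using least[of e'] e' unfolding F_def by simp
    qed
  qed
qed

lemma large_ratio_parameters:
  fixes b R :: real
  assumes b: "0 < b" "1 / b \<le> 64" and R: "0 < R" and a: "2 * 10^7 \<le> ln (R / b)"
  defines "D \<equiv> R / (2 * ln (R / b))"
  shows "1 \<le> R" "b \<le> R" "2 \<le> D" "sqrt R \<le> D" "D \<le> R"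
    and "5 * sqrt R \<le> R * ln (ln (R / b)) / ln (R / b)"
proof -
  define a where "a = ln (R / b)"
  define r where "r = sqrt R"
  have a_pos: "0 < a" using a unfolding a_def by simp
  have m: "1 \<le> ln a" using ln_large_bounds(1) a unfolding a_def by simp
  have rr: "r * r = R" unfolding r_def using R by simp
  have "a^2 / 128 \<le> r"
    unfolding r_def using ratio_large_bounds(1)[OF b R] a unfolding a_def by (intro real_le_rsqrt) simp
  moreover have "a * 1280 \<le> a^2" using a unfolding a_def by (simp add: power2_eq_square)
  ultimately have r5a: "5 * a \<le> r" using a_pos by (simp add: field_simps)
  moreover have "20000000 \<le> a" using a unfolding a_def by simp
  ultimately have r1: "1 \<le> r" by linarith
  then show R1: "1 \<le> R" using mult_mono[OF r1 r1] rr by simp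
  show "b \<le> R" using ratio_large_bounds(2)[OF b R] a by simp
  have "2 * a * r \<le> r * r" using r5a a_pos r1 by (intro mult_right_mono) auto
  then have rD: "r \<le> D" unfolding D_def a_def[symmetric] rr using a_pos by (simp add: field_simps)
  then show "sqrt R \<le> D" unfolding r_def .
  show "2 \<le> D" using rD r5a a unfolding a_def by simp
  show "D \<le> R" unfolding D_def using R a by (simp add: divide_le_eq)
  have "5 * r * a \<le> R" using mult_left_mono[OF r5a, of r] r1 rr by (simp add: algebra_simps)
  then have "5 * r \<le> R / a" using a_pos by (simp add: pos_le_divide_eq)
  also have "\<dots> \<le> R * ln a / a" using m R1 a_pos by (intro divide_right_mono) auto
  finally show "5 * sqrt R \<le> R * ln (ln (R / b)) / ln (R / b)" unfolding r_def a_def .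
qed

lemma G_scaled_window_bounds:
  assumes b: "0 < b" "1 / b \<le> 64" and R: "0 < R" and a: "2 * 10^7 \<le> ln (R / b)"
  shows "-R + R / (2 * ln (R / b)) \<le> t
      \<Longrightarrow> pi * ln (R / b) - 720 - 8 * ln (ln (R / b)) \<le> G_scaled b R t"
    and "-R < t \<Longrightarrow> t \<le> R \<Longrightarrow> G_scaled b R t \<le> pi * ln (R / b) + 400"
proof -
  define D where "D = R / (2 * ln (R / b))"
  note par = large_ratio_parameters[OF b R a, folded D_def]
  have "ln D = ln R - ln 2 - ln (ln (R / b))"
    unfolding D_def using R a by (simp add: ln_div ln_mult)
  then have "ln R - ln D \<le> 1 + ln (ln (R / b))" using ln_2_less_1 by linarith
  show "pi * ln (R / b) - 720 - 8 * ln (ln (R / b)) \<le> G_scaled b R t"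
    if "-R + R / (2 * ln (R / b)) \<le> t"
  proof -
    have "-R + D \<le> t" using that unfolding D_def .
    moreover have "pi * ln (R / b) - 720 - 8 * ln (ln (R / b)) \<le> pi * ln (R / b) - 711 - 8 * (ln R - ln D)"
      using \<open>ln R - ln D \<le> 1 + ln (ln (R / b))\<close> by simp
    ultimately show ?thesis using G_scaled_ge[OF par(1) b par(2) par(3-5)] by (meson order_trans)
  qed
  show "G_scaled b R t \<le> pi * ln (R / b) + 400" if "-R < t" "t \<le> R"
    using G_scaled_le[OF par(1) b par(2) that] .
qed

lemma disc_count_window:
  fixes a R :: real
  assumes a: "2 * 10^7 \<le> a" and R: "1 \<le> R" and err: "5 * sqrt R \<le> R * ln a / a"
  shows "real (disc_count R) \<le> R * (a + 1000 * ln a) / a^2 * (pi * a - 720 - 8 * ln a)"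
    and "R * (a - 1000 * ln a) / a^2 * (pi * a + 400) \<le> real (disc_count R)"
proof -
  define m where "m = ln a"
  have m: "1 \<le> m" "2000 * m \<le> a" using ln_large_bounds[OF a] unfolding m_def by auto
  have a_pos: "0 < a" using a by simp
  have "\<bar>real (disc_count R) - pi * R\<bar> \<le> 4 * sqrt R + 1" using disc_count_error R by simp
  moreover have "1 \<le> sqrt R" using R by simp
  ultimately have N: "\<bar>real (disc_count R) - pi * R\<bar> \<le> R * m / a" using err unfolding m_def by linarith
  have pa: "3 * (a * m) \<le> pi * (a * m)" using pi_gt3 a_pos m by (intro mult_right_mono) auto
  have am1: "a \<le> a * m" using m a_pos by (simp add: mult_le_cancel_left1)
  have "(1000 * m) * m \<le> (a / 2) * m" using m by (intro mult_right_mono) auto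
  then have am2: "1000 * (m * m) \<le> (a * m) / 2" by (simp add: mult.assoc)
  have am3: "1000 * m \<le> a * m" using m a_pos by (intro mult_right_mono) auto
  have "pi * a^2 + a * m \<le> (a + 1000 * m) * (pi * a - 720 - 8 * m)"
  proof -
    have "(a + 1000 * m) * (pi * a - 720 - 8 * m) = pi * a^2 - 720 * a - 8 * (a * m)
        + 1000 * (pi * (a * m)) - 720000 * m - 8000 * (m * m)"
      by (simp add: algebra_simps power2_eq_square)
    then show ?thesis using pa am1 am2 am3 m by linarith
  qed
  then have "R * (pi * a^2 + a * m) / a^2 \<le> R * ((a + 1000 * m) * (pi * a - 720 - 8 * m)) / a^2"
    using R by (intro divide_right_mono mult_left_mono) auto
  moreover have "R * (pi * a^2 + a * m) / a^2 = pi * R + R * m / a"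
    using a_pos by (simp add: field_simps power2_eq_square)
  ultimately show "real (disc_count R) \<le> R * (a + 1000 * ln a) / a^2 * (pi * a - 720 - 8 * ln a)"
    using N unfolding m_def[symmetric] by (simp add: abs_le_iff)
  have "(a - 1000 * m) * (pi * a + 400) \<le> pi * a^2 - a * m"
  proof -
    have "(a - 1000 * m) * (pi * a + 400) = pi * a^2 + 400 * a - 1000 * (pi * (a * m)) - 400000 * m"
      by (simp add: algebra_simps power2_eq_square)
    then show ?thesis using pa am1 m by linarith
  qed
  then have "R * ((a - 1000 * m) * (pi * a + 400)) / a^2 \<le> R * (pi * a^2 - a * m) / a^2"
    using R by (intro divide_right_mono mult_left_mono) auto
  moreover have "R * (pi * a^2 - a * m) / a^2 = pi * R - R * m / a"
    using a_pos by (simp add: field_simps power2_eq_square)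
  ultimately show "R * (a - 1000 * ln a) / a^2 * (pi * a + 400) \<le> real (disc_count R)"
    using N unfolding m_def[symmetric] by (simp add: abs_le_iff)
qed

lemma window_arithmetic:
  fixes a R :: real
  assumes a: "2 * 10^7 \<le> a" and R: "0 < R"
  defines "X \<equiv> R * (a + 1000 * ln a) / a^2" and "U \<equiv> R * (a - 1000 * ln a) / a^2"
  shows "R / (2 * a) \<le> U" "U \<le> X" "X \<le> R" "0 < pi * a - 720 - 8 * ln a"
    and "-X \<le> e \<Longrightarrow> e \<le> -U \<Longrightarrow> \<bar>e + R / a\<bar> \<le> 1000 * R * ln a / a^2"
proof -
  define m where "m = ln a"
  have a_pos: "0 < a" and m: "1 \<le> m" "2000 * m \<le> a"
    using a ln_large_bounds[OF a] unfolding m_def by auto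
  have "3 * a \<le> pi * a" using pi_gt3 a_pos by (intro mult_right_mono) auto
  moreover have "20000000 \<le> a" using a by simp
  ultimately show "0 < pi * a - 720 - 8 * ln a" using m unfolding m_def by linarith
  have "R * (a / 2) \<le> R * (a - 1000 * m)" using m R by (intro mult_left_mono) auto
  then show "R / (2 * a) \<le> U"
    unfolding U_def m_def[symmetric] using a_pos by (simp add: field_simps power2_eq_square)
  show "U \<le> X" unfolding U_def X_def using R m unfolding m_def
    by (intro divide_right_mono mult_left_mono) auto
  have "2 * a \<le> a * a" using a by (intro mult_right_mono) auto
  then have "a + 1000 * m \<le> a^2" unfolding power2_eq_square using m by linarith
  then show "X \<le> R" unfolding X_def m_def[symmetric] using R a_pos by (simp add: divide_le_eq)
  have "X = R / a + 1000 * R * m / a^2" "U = R / a - 1000 * R * m / a^2"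
    unfolding X_def U_def m_def using a_pos by (simp_all add: field_simps power2_eq_square)
  then show "\<bar>e + R / a\<bar> \<le> 1000 * R * ln a / a^2" if "-X \<le> e" "e \<le> -U"
    using that unfolding m_def by linarith
qed

definition scaled_polaron_eq :: "real \<Rightarrow> real \<Rightarrow> real \<Rightarrow> bool" where
  "scaled_polaron_eq b R e \<longleftrightarrow>
     (\<forall>p. rnorm2 p \<le> R \<longrightarrow> - R < - rnorm2 p - e \<and> G_scaled b R (- rnorm2 p - e) \<noteq> 0) \<and>
     - e = (\<Sum>p\<in>{p. rnorm2 p \<le> R}. inverse (G_scaled b R (- rnorm2 p - e)))"

lemma least_scaled_polaron_energy:
  fixes b R :: real
  assumes b: "0 < b" "1 / b \<le> 64" and R: "0 < R" and a0: "2 * 10^7 \<le> ln (R / b)"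
  shows "\<exists>e. scaled_polaron_eq b R e \<and> (\<forall>e'. scaled_polaron_eq b R e' \<longrightarrow> e \<le> e') \<and>
           \<bar>e + R / ln (R / b)\<bar> \<le> 1000 * R * ln (ln (R / b)) / (ln (R / b))^2"
proof -
  define a where "a = ln (R / b)"
  define m where "m = ln a"
  define X where "X = R * (a + 1000 * m) / a^2"
  define U where "U = R * (a - 1000 * m) / a^2"
  define D where "D = R / (2 * a)"
  define I where "I = {p. rnorm2 p \<le> R}"
  define g where "g p e = G_scaled b R (- rnorm2 p - e)" for p e
  note par = large_ratio_parameters[OF b R a0, folded a_def m_def, folded D_def]
  have a: "2 * 10^7 \<le> a" using a0 unfolding a_def .
  note ar = window_arithmetic[OF a R, folded m_def, folded X_def U_def D_def]
  have gU: "0 < pi * a + 400" using a by (simp add: add_pos_pos)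
  note gL = ar(4) and DU = ar(1) and UX = ar(2) and XR = ar(3)
  have window: "-R + D \<le> - rnorm2 p - e" "- rnorm2 p - e \<le> R" "-R < - rnorm2 p - e"
    if "p \<in> I" "-X \<le> e" "e \<le> -U" for p e
    using that DU XR par(3) norm2_nonneg[of p] unfolding I_def by auto
  have g_lower: "pi * a - 720 - 8 * m \<le> g p e" if "p \<in> I" "e \<le> -U" for p e
    unfolding g_def a_def m_def
    by (rule G_scaled_window_bounds(1)[OF b R a0])
      (use that DU norm2_nonneg[of p] in \<open>auto simp: I_def D_def a_def\<close>)
  obtain e where e: "-X \<le> e" "e \<le> -U" "-e = (\<Sum>p\<in>I. inverse (g p e))"
    and least: "\<And>e'. -e' = (\<Sum>p\<in>I. inverse (g p e')) \<Longrightarrow> e \<le> e'"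
  proof (rule least_solution_of_inverse_sum_eq[OF finite_disc[of R, folded I_def] UX gL gU])
    have "real (card I) \<le> X * (pi * a - 720 - 8 * m)" "U * (pi * a + 400) \<le> real (card I)"
      using disc_count_window[OF a par(1) par(6)[unfolded m_def]]
      unfolding I_def disc_count_def X_def U_def m_def by simp_all
    then show "real (card I) / (pi * a - 720 - 8 * m) \<le> X" "U \<le> real (card I) / (pi * a + 400)"
      by (simp_all add: pos_divide_le_eq[OF gL] pos_le_divide_eq[OF gU])
    show "pi * a - 720 - 8 * m \<le> g p e" if "p \<in> I" "e \<le> -U" for p e by (rule g_lower[OF that])
    show "g p e \<le> pi * a + 400" if "p \<in> I" "-X \<le> e" "e \<le> -U" for p e
      unfolding g_def a_def using G_scaled_window_bounds(2)[OF b R a0] window[OF that] by simp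
    show "continuous_on {-X..-U} (g p)" if "p \<in> I" for p
      unfolding g_def using window(1)[OF that, of "-U"] UX par(1,3)
      by (intro continuous_on_G_scaled_reflected[OF _ b(1)]) auto
  qed blast
  have "scaled_polaron_eq b R e"
    unfolding scaled_polaron_eq_def
  proof (intro conjI allI impI)
    fix p assume "rnorm2 p \<le> R"
    then have p: "p \<in> I" unfolding I_def by simp
    show "- R < - rnorm2 p - e" using window(3)[OF p e(1,2)] .
    show "G_scaled b R (- rnorm2 p - e) \<noteq> 0" using g_lower[OF p e(2)] gL unfolding g_def by simp
  next
    show "- e = (\<Sum>p\<in>{p. rnorm2 p \<le> R}. inverse (G_scaled b R (- rnorm2 p - e)))"
      using e(3) unfolding I_def g_def .
  qed
  moreover have "e \<le> e'" if "scaled_polaron_eq b R e'" for e'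
    using that unfolding scaled_polaron_eq_def by (intro least) (simp add: I_def g_def)
  moreover have "\<bar>e + R / a\<bar> \<le> 1000 * R * m / a^2" using ar(5) e(1,2) .
  ultimately show ?thesis unfolding a_def m_def by blast
qed

section \<open>Back to physical units\<close>

lemma ksq_eq: "ksq L p = (2 * pi / L)^2 * rnorm2 p"
  unfolding ksq_def norm2_def by simp

lemma Gmu_eq_G_scaled:
  fixes L EB \<mu> \<tau> :: real
  assumes L: "0 < L"
  defines "s \<equiv> (2 * pi / L)^2"
  shows "Gmu EB L \<mu> \<tau> = (1 / (L^2 * s)) * G_scaled (- EB / s) (\<mu> / s) (\<tau> / s)"
proof -
  have s: "0 < s" unfolding s_def using L by simp
  have pt: "1 / (ksq L p - EB) - (if ksq L p > \<mu> then 1 / (ksq L p + \<tau>) else 0)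
      = (1 / s) * (1 / (rnorm2 p + - EB / s)
          - (if \<mu> / s < rnorm2 p then 1 / (rnorm2 p + \<tau> / s) else 0))" for p
  proof -
    have k: "ksq L p = s * rnorm2 p" unfolding ksq_eq s_def ..
    have "ksq L p - EB = s * (rnorm2 p + - EB / s)" "ksq L p + \<tau> = s * (rnorm2 p + \<tau> / s)"
      "ksq L p > \<mu> \<longleftrightarrow> \<mu> / s < rnorm2 p"
      unfolding k using s by (simp_all add: field_simps mult.commute)
    then show ?thesis by (simp add: right_diff_distrib)
  qed
  have "Gmu EB L \<mu> \<tau> = (1 / L^2) * (\<Sum>\<^sub>\<infinity>p\<in>UNIV. (1 / s) * (1 / (rnorm2 p + - EB / s)
      - (if \<mu> / s < rnorm2 p then 1 / (rnorm2 p + \<tau> / s) else 0)))"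
    unfolding Gmu_def pt ..
  also have "\<dots> = (1 / L^2) * ((1 / s) * G_scaled (- EB / s) (\<mu> / s) (\<tau> / s))"
    unfolding G_scaled_def by (subst infsum_cmult_right') rule
  finally show ?thesis by simp
qed

lemma polaron_eq_iff_scaled:
  fixes L EB \<mu> e :: real
  assumes L: "0 < L"
  defines "s \<equiv> (2 * pi / L)^2"
  shows "polaron_eq EB L \<mu> e \<longleftrightarrow> scaled_polaron_eq (- EB / s) (\<mu> / s) (e / s)"
proof -
  have s: "0 < s" unfolding s_def using L by simp
  define c where "c = 1 / (L^2 * s)"
  have c: "0 < c" unfolding c_def using s L by simp
  have G: "Gmu EB L \<mu> \<tau> = c * G_scaled (- EB / s) (\<mu> / s) (\<tau> / s)" for \<tau>
    unfolding c_def s_def using Gmu_eq_G_scaled[OF L] by simp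
  have k: "ksq L p = s * rnorm2 p" for p unfolding ksq_eq s_def ..
  have arg: "(- ksq L p - e) / s = - rnorm2 p - e / s" for p
    unfolding k using s by (simp add: field_simps)
  have le: "ksq L p \<le> \<mu> \<longleftrightarrow> rnorm2 p \<le> \<mu> / s" for p
    unfolding k using s by (simp add: field_simps mult.commute)
  have gt: "- \<mu> < - ksq L p - e \<longleftrightarrow> - (\<mu> / s) < - rnorm2 p - e / s" for p
  proof -
    have x1: "s * (- rnorm2 p - e / s) = - ksq L p - e" unfolding k using s by (simp add: field_simps)
    have x2: "s * (- (\<mu> / s)) = - \<mu>" using s by simp
    have "- \<mu> < - ksq L p - e \<longleftrightarrow> s * (- (\<mu> / s)) < s * (- rnorm2 p - e / s)" unfolding x1 x2 ..
    also have "\<dots> \<longleftrightarrow> - (\<mu> / s) < - rnorm2 p - e / s" by (rule mult_less_cancel_left_pos[OF s])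
    finally show ?thesis .
  qed
  have "(1 / L^2) * (\<Sum>p\<in>{p. ksq L p \<le> \<mu>}. inverse (Gmu EB L \<mu> (- ksq L p - e)))
      = (1 / L^2 * inverse c) * (\<Sum>p\<in>{p. rnorm2 p \<le> \<mu> / s}.
          inverse (G_scaled (- EB / s) (\<mu> / s) (- rnorm2 p - e / s)))"
    unfolding G arg le by (simp add: inverse_mult_distrib sum_distrib_left)
  also have "1 / L^2 * inverse c = s" unfolding c_def using L s by (simp add: field_simps)
  finally have sum: "(1 / L^2) * (\<Sum>p\<in>{p. ksq L p \<le> \<mu>}. inverse (Gmu EB L \<mu> (- ksq L p - e)))
      = s * (\<Sum>p\<in>{p. rnorm2 p \<le> \<mu> / s}. inverse (G_scaled (- EB / s) (\<mu> / s) (- rnorm2 p - e / s)))" .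
  have "- e = s * S \<longleftrightarrow> - (e / s) = S" for S using s by (auto simp: field_simps)
  then have eqn: "(- e = (1 / L^2) * (\<Sum>p\<in>{p. ksq L p \<le> \<mu>}. inverse (Gmu EB L \<mu> (- ksq L p - e))))
      \<longleftrightarrow> - (e / s) = (\<Sum>p\<in>{p. rnorm2 p \<le> \<mu> / s}. inverse (G_scaled (- EB / s) (\<mu> / s) (- rnorm2 p - e / s)))"
    unfolding sum by blast
  have admissible: "(\<forall>p. ksq L p \<le> \<mu> \<longrightarrow> - \<mu> < - ksq L p - e \<and> Gmu EB L \<mu> (- ksq L p - e) \<noteq> 0)
      \<longleftrightarrow> (\<forall>p. rnorm2 p \<le> \<mu> / s \<longrightarrow> - (\<mu> / s) < - rnorm2 p - e / s
            \<and> G_scaled (- EB / s) (\<mu> / s) (- rnorm2 p - e / s) \<noteq> 0)"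
    unfolding le gt G arg using c by simp
  show ?thesis unfolding polaron_eq_def scaled_polaron_eq_def admissible eqn ..
qed

lemma eP_eq_scaled_least:
  fixes L EB \<mu> e :: real
  assumes L: "0 < L"
  defines "s \<equiv> (2 * pi / L)^2"
  assumes e: "scaled_polaron_eq (- EB / s) (\<mu> / s) e"
    and least: "\<And>e'. scaled_polaron_eq (- EB / s) (\<mu> / s) e' \<Longrightarrow> e \<le> e'"
  shows "eP EB L \<mu> = s * e"
  unfolding eP_def
proof (rule Least_equality)
  have s: "0 < s" unfolding s_def using L by simp
  note eq = polaron_eq_iff_scaled[OF L, folded s_def]
  show "polaron_eq EB L \<mu> (s * e)" unfolding eq using e s by simp
  show "s * e \<le> y" if "polaron_eq EB L \<mu> y" for y
    using least[of "y / s"] that s unfolding eq by (simp add: pos_le_divide_eq mult.commute)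
qed

lemma binding_energy_in_momentum_units:
  fixes EB L :: real
  assumes EB: "EB < 0" and L: "0 < L" and LE: "1 \<le> L * sqrt \<bar>EB\<bar>"
  shows "0 < - EB / (2 * pi / L)^2" "1 / (- EB / (2 * pi / L)^2) \<le> 64"
proof -
  show "0 < - EB / (2 * pi / L)^2" using EB L by (intro divide_pos_pos) auto
  have "1 \<le> (L * sqrt \<bar>EB\<bar>)^2" using LE by (simp add: one_le_power)
  then have La: "1 \<le> L^2 * \<bar>EB\<bar>" by (simp add: power_mult_distrib)
  have "1 / (- EB / (2 * pi / L)^2) = 4 * pi^2 / (L^2 * \<bar>EB\<bar>)"
    using EB L by (simp add: field_simps power2_eq_square)
  also have "\<dots> \<le> 4 * pi^2" using La by (simp add: divide_le_eq mult_le_cancel_left1)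
  also have "\<dots> \<le> 4 * 4^2" using pi_less_4 by (intro mult_left_mono power_mono) auto
  finally show "1 / (- EB / (2 * pi / L)^2) \<le> 64" by simp
qed

lemma eP_asymptotics:
  fixes EB L \<mu> :: real
  assumes EB: "EB < 0" and L: "0 < L" and mu: "0 < \<mu>"
    and LE: "1 \<le> L * sqrt \<bar>EB\<bar>" and muE: "exp (2 * 10^7) \<le> \<mu> / \<bar>EB\<bar>"
  shows "\<bar>eP EB L \<mu> + \<mu> / ln (\<mu> / \<bar>EB\<bar>)\<bar> \<le> 1000 * \<mu> * ln (ln (\<mu> / \<bar>EB\<bar>)) / (ln (\<mu> / \<bar>EB\<bar>))^2"
proof -
  define s where "s = (2 * pi / L)^2"
  define R where "R = \<mu> / s"
  have s: "0 < s" unfolding s_def using L by simp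
  note b = binding_energy_in_momentum_units[OF EB L LE, folded s_def]
  have ratio: "R / (- EB / s) = \<mu> / \<bar>EB\<bar>" unfolding R_def using s EB by (simp add: field_simps)
  have R0: "0 < R" unfolding R_def using mu s by simp
  have big: "2 * 10^7 \<le> ln (R / (- EB / s))"
  proof -
    have "0 < \<mu> / \<bar>EB\<bar>" using mu EB by (intro divide_pos_pos) auto
    then show ?thesis unfolding ratio using muE by (subst ln_ge_iff) auto
  qed
  then obtain e where "scaled_polaron_eq (- EB / s) R e" "\<forall>e'. scaled_polaron_eq (- EB / s) R e' \<longrightarrow> e \<le> e'"
    and bound: "\<bar>e + R / ln (\<mu> / \<bar>EB\<bar>)\<bar> \<le> 1000 * R * ln (ln (\<mu> / \<bar>EB\<bar>)) / (ln (\<mu> / \<bar>EB\<bar>))^2"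
    using least_scaled_polaron_energy[OF b R0 big] unfolding ratio by blast
  then have "eP EB L \<mu> = s * e" unfolding s_def R_def by (intro eP_eq_scaled_least[OF L]) auto
  then have "eP EB L \<mu> + \<mu> / ln (\<mu> / \<bar>EB\<bar>) = s * (e + R / ln (\<mu> / \<bar>EB\<bar>))"
    unfolding R_def using s by (simp add: distrib_left)
  then have "\<bar>eP EB L \<mu> + \<mu> / ln (\<mu> / \<bar>EB\<bar>)\<bar> = s * \<bar>e + R / ln (\<mu> / \<bar>EB\<bar>)\<bar>"
    using s by (simp add: abs_mult)
  also have "\<dots> \<le> s * (1000 * R * ln (ln (\<mu> / \<bar>EB\<bar>)) / (ln (\<mu> / \<bar>EB\<bar>))^2)"
    using bound s by (intro mult_left_mono) auto
  finally show ?thesis unfolding R_def using s by simp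
qed

theorem lemma5p3:
  fixes EB :: real
  assumes "EB < 0"
  shows "\<exists>C > 0. \<exists>\<mu>0 > 0. \<forall>L \<mu> :: real. L > 0 \<longrightarrow> \<mu> > 0 \<longrightarrow>
           L * sqrt \<bar>EB\<bar> \<ge> 1 \<longrightarrow> \<mu> / \<bar>EB\<bar> \<ge> \<mu>0 \<longrightarrow>
           \<bar>eP EB L \<mu> + \<mu> / ln (\<mu> / \<bar>EB\<bar>)\<bar>
             \<le> C * \<mu> * ln (ln (\<mu> / \<bar>EB\<bar>)) / (ln (\<mu> / \<bar>EB\<bar>))^2"
proof (intro exI conjI allI impI)
  show "(0::real) < 1000" "(0::real) < exp (2 * 10^7)" by simp_all
  fix L \<mu> :: real
  assume "0 < L" "0 < \<mu>" "1 \<le> L * sqrt \<bar>EB\<bar>" "exp (2 * 10^7) \<le> \<mu> / \<bar>EB\<bar>"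
  then show "\<bar>eP EB L \<mu> + \<mu> / ln (\<mu> / \<bar>EB\<bar>)\<bar>
      \<le> 1000 * \<mu> * ln (ln (\<mu> / \<bar>EB\<bar>)) / (ln (\<mu> / \<bar>EB\<bar>))^2"
    by (rule eP_asymptotics[OF assms])
qed

end
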